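(* Let $F$ satisfy the standing assumptions below, $\lambda>0$, $\varepsilon>0$ with $\varepsilon\le\frac72(G+\sigma)$, and $T\ge49(G+\sigma)^2\varepsilon^{-2}$. Run the general conversion scheme below with the choice $\mathbf{x}_t=\mathbf{x}_0$ for all $t\in[T]$, with an online learner satisfying, for all $t\in[T]$ and all comparators $\mathbf{u}$ (deterministic or depending on the run), $\mathbb{E}[\mathrm{Regret}^\beta_t(\mathbf{u})]\le\frac{2\|\mathbf{u}\|(G+\sigma)}{\beta\sqrt{1-\beta}}+\frac\mu2\|\mathbf{u}\|^2$, and with $\beta=1-\left(\frac{\varepsilon}{7(G+\sigma)}\right)^2$ and $\mu=2\lambda^{1/2}\varepsilon^{1/2}$. Then $$\mathbb{E}_\tau\|\nabla F(\overline{\mathbf{y}}_\tau)\|_\lambda\le3\varepsilon+\frac{4\lambda^{1/2}\varepsilon^{-1/2}}{T}\,\mathbb{E}\sum_{t=1}^T\big(F(\mathbf{x}_0)-F(\mathbf{w}_t)\big).$$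
   Context: Norms are Euclidean. Standing assumptions: $F:\mathbb{R}^d\to\mathbb{R}$ differentiable; for all $\mathbf{x},\mathbf{w}$, $F(\mathbf{x})-F(\mathbf{w})=\int_0^1\langle\nabla F(\mathbf{w}+t(\mathbf{x}-\mathbf{w})),\mathbf{x}-\mathbf{w}\rangle\,dt$; $\|\nabla F\|\le G$ everywhere. The stochastic gradient oracle at $\mathbf{x}$ independently returns $\mathbf{g}$ with $\mathbb{E}\mathbf{g}=\nabla F(\mathbf{x})$, $\mathbb{E}\|\mathbf{g}-\nabla F(\mathbf{x})\|^2\le\sigma^2$. $\|\nabla F(\mathbf{x})\|_\lambda := \inf\{\|\mathbb{E}_{\mathbf{w}\sim p}\nabla F(\mathbf{w})\|+\lambda\mathbb{E}_{\mathbf{w}\sim p}\|\mathbf{w}-\mathbf{x}\|^2\}$ over probability distributions $p$ on $\mathbb{R}^d$ with mean $\mathbf{x}$. General conversion scheme: input $\mathbf{x}_0=\mathbf{w}_0$, $T$, $\mu\ge0$, online learner $\mathcal{A}$ (output $\Delta_t$ at round $t$ based on $\ell_1,\dots,\ell_{t-1}$). For $t=1,\dots,T$: receive $\Delta_t$; choose $\mathbf{x}_t$; $\mathbf{w}_t=\mathbf{x}_t+\Delta_t$; $\mathbf{y}_t=\mathbf{x}_t+s_t\Delta_t$, $s_t\sim\mathrm{Unif}[0,1]$ i.i.d.; $\mathbf{g}_t$ = oracle output at $\mathbf{y}_t$; send $\ell_t(\mathbf{v})=\langle\mathbf{g}_t,\mathbf{v}\rangle+\frac\mu2\|\mathbf{v}\|^2$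 to $\mathcal{A}$. $\mathrm{Regret}^\beta_t(\mathbf{u}) := \sum_{s=1}^t\beta^{t-s}(\ell_s(\Delta_s)-\ell_s(\mathbf{u}))$. $\overline{\mathbf{y}}_t := \frac{1-\beta}{1-\beta^t}\sum_{s=1}^t\beta^{t-s}\mathbf{y}_s$. $\tau$ is independent of the algorithm with $\Pr(\tau=t)=\frac{1-\beta^t}{T}$ ($t\le T-1$), $\Pr(\tau=T)=\frac{1-\beta^T}{(1-\beta)T}$; $\mathbb{E}_\tau$ is expectation over $\tau$ and all algorithmic randomness. (With $\mathbf{x}_t\equiv\mathbf{x}_0$ the iterate stability factor is $0$, so the parameters are those of the general guarantee with stability factor $0$: comparator norm $\frac14\lambda^{-1/2}\varepsilon^{1/2}$.) *)

theory Defs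
  imports "HOL-Probability.Probability"
begin

definition lambda_norm :: "('a::euclidean_space \<Rightarrow> 'a) \<Rightarrow> real \<Rightarrow> 'a \<Rightarrow> real" where
  "lambda_norm gradF lam x =
     Inf {norm (\<integral>w. gradF w \<partial>p) + lam * (\<integral>w. (norm (w - x))^2 \<partial>p) | p.
            prob_space p \<and> sets p = sets borel \<and>
            integrable p (\<lambda>w. w) \<and> (\<integral>w. w \<partial>p) = x \<and>
            integrable p (\<lambda>w. (norm (w - x))^2) \<and> integrable p gradF}"

definition lin_quad_loss :: "real \<Rightarrow> 'a::real_inner \<Rightarrow> 'a \<Rightarrow> real" where
  "lin_quad_loss mu g v = g \<bullet> v + mu / 2 * (norm v)^2"

text \<open>Sample space of the run: learner randomness rho ~ R, and for each round
  t in [T] an independent pair (s_t, xi_t) with s_t ~ Unif[0,1] and oracle noise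
  xi_t ~ Xi.\<close>
definition conv_space :: "'r measure \<Rightarrow> 'e measure \<Rightarrow> nat \<Rightarrow> ('r \<times> (nat \<Rightarrow> real \<times> 'e)) measure" where
  "conv_space R Xi T =
     R \<Otimes>\<^sub>M (\<Pi>\<^sub>M t\<in>{1..T}. (uniform_measure lborel {0..(1::real)} \<Otimes>\<^sub>M Xi))"

text \<open>Stochastic gradients g_1..g_n of the run with x_t = x0 (as a list).
  The learner A receives the randomness rho and the list of past losses.\<close>
fun conv_grads :: "('r \<Rightarrow> ('a::euclidean_space \<Rightarrow> real) list \<Rightarrow> 'a) \<Rightarrow> ('a \<Rightarrow> 'e \<Rightarrow> 'a) \<Rightarrow> 'a \<Rightarrow> real
     \<Rightarrow> 'r \<times> (nat \<Rightarrow> real \<times> 'e) \<Rightarrow> nat \<Rightarrow> 'a list" where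
  "conv_grads A Orc x0 mu \<omega> 0 = []"
| "conv_grads A Orc x0 mu \<omega> (Suc n) =
     (let gs = conv_grads A Orc x0 mu \<omega> n;
          \<Delta> = A (fst \<omega>) (map (lin_quad_loss mu) gs);
          s = fst (snd \<omega> (Suc n));
          xi = snd (snd \<omega> (Suc n))
      in gs @ [Orc (x0 + s *\<^sub>R \<Delta>) xi])"

text \<open>Delta_t (t >= 1): learner output based on l_1..l_(t-1).\<close>
definition conv_Delta where
  "conv_Delta A Orc x0 mu \<omega> t = A (fst \<omega>) (map (lin_quad_loss mu) (conv_grads A Orc x0 mu \<omega> (t - 1)))"

definition conv_w where
  "conv_w A Orc x0 mu \<omega> t = x0 + conv_Delta A Orc x0 mu \<omega> t"

definition conv_y where
  "conv_y A Orc x0 mu \<omega> t = x0 + fst (snd \<omega> t) *\<^sub>R conv_Delta A Orc x0 mu \<omega> t"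

definition conv_g where
  "conv_g A Orc x0 mu \<omega> t = Orc (conv_y A Orc x0 mu \<omega> t) (snd (snd \<omega> t))"

definition regret_beta :: "real \<Rightarrow> (nat \<Rightarrow> 'a \<Rightarrow> real) \<Rightarrow> (nat \<Rightarrow> 'a) \<Rightarrow> nat \<Rightarrow> 'a \<Rightarrow> real" where
  "regret_beta \<beta> l \<Delta> t u = (\<Sum>s=1..t. \<beta>^(t-s) * (l s (\<Delta> s) - l s u))"

definition exp_avg :: "real \<Rightarrow> (nat \<Rightarrow> 'a::real_vector) \<Rightarrow> nat \<Rightarrow> 'a" where
  "exp_avg \<beta> y t = ((1 - \<beta>) / (1 - \<beta>^t)) *\<^sub>R (\<Sum>s=1..t. \<beta>^(t-s) *\<^sub>R y s)"

definition tau_prob :: "real \<Rightarrow> nat \<Rightarrow> nat \<Rightarrow> real" where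
  "tau_prob \<beta> T t = (if t < T then (1 - \<beta>^t) / real T else (1 - \<beta>^T) / ((1 - \<beta>) * real T))"

end

theory Submission
  imports Defs
begin

(* With x_t = x_0 every query point y_t = x_0 + s_t Delta_t lies at a uniform position on the
   segment from x_0 to w_t, so by the fundamental theorem of calculus the expected linear loss
   <g_t, Delta_t> is exactly E[F(w_t) - F(x_0)]. Feeding the learner the comparator of norm D
   opposite to the discounted gradient sum V_t turns its regret bound into a bound on |V_t|.
   The discounted average of the true gradients at the y_s differs from V_t / B_t only by a
   martingale noise term of second moment at most sigma^2/(1 - beta), and the spread of the
   y_s around ybar_t is at most the discounted mean of |Delta_s|^2, which the quadratic part
   of the losses absorbs. Averaging over tau telescopes the discounted sums and leaves the
   total decrease of F. *)

section \<open>Measure-theoretic and analytic preliminaries\<close>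

lemma borel_measurable_gradient:
  fixes F :: "'a::euclidean_space \<Rightarrow> real" and gradF :: "'a \<Rightarrow> 'a"
  assumes grad: "\<And>x. (F has_derivative (\<lambda>h. gradF x \<bullet> h)) (at x)"
  shows "gradF \<in> borel_measurable borel"
proof -
  have "continuous_on UNIV F"
    using grad has_derivative_continuous continuous_at_imp_continuous_on by blast
  then have F_meas: "F \<in> borel_measurable borel"
    using borel_measurable_continuous_onI by blast
  have "(\<lambda>x. gradF x \<bullet> b) \<in> borel_measurable borel" for b
  proof (rule borel_measurable_LIMSEQ_real)
    fix n :: nat
    show "(\<lambda>x. (F (x + (1 / real (Suc n)) *\<^sub>R b) - F x) * real (Suc n)) \<in> borel_measurable borel"
      using F_meas by measurable
  next
    fix x :: 'a
    have "((\<lambda>t. x + t *\<^sub>R b) has_derivative (\<lambda>t. t *\<^sub>R b)) (at 0)"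
      by (auto intro!: derivative_eq_intros)
    moreover have "(F has_derivative (\<lambda>h. gradF x \<bullet> h)) (at (x + 0 *\<^sub>R b))"
      using grad[of x] by simp
    ultimately have "((\<lambda>t. F (x + t *\<^sub>R b)) has_derivative (\<lambda>t. gradF x \<bullet> (t *\<^sub>R b))) (at 0)"
      by (rule has_derivative_compose)
    then have "((\<lambda>t. F (x + t *\<^sub>R b)) has_real_derivative (gradF x \<bullet> b)) (at 0)"
      by (simp add: has_field_derivative_def mult.commute[of _ "gradF x \<bullet> b"])
    then have lim: "((\<lambda>h. (F (x + h *\<^sub>R b) - F x) / h) \<longlongrightarrow> gradF x \<bullet> b) (at 0)"
      unfolding DERIV_def by simp
    have "filterlim (\<lambda>n. 1 / real (Suc n)) (at 0) sequentially"
    proof (rule tendsto_imp_filterlim_at_right[THEN filterlim_mono])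
      show "(\<lambda>n. 1 / real (Suc n)) \<longlonglongrightarrow> 0"
        using LIMSEQ_inverse_real_of_nat by (simp add: inverse_eq_divide)
    qed (simp_all add: at_le)
    from filterlim_compose[OF lim this]
    show "(\<lambda>n. (F (x + (1 / real (Suc n)) *\<^sub>R b) - F x) * real (Suc n)) \<longlonglongrightarrow> gradF x \<bullet> b"
      by (simp add: o_def)
  qed
  then show ?thesis
    by (subst borel_measurable_euclidean_space) auto
qed

lemma lipschitz_bound_of_gradient_bound:
  fixes F :: "'a::euclidean_space \<Rightarrow> real" and gradF :: "'a \<Rightarrow> 'a"
  assumes ftc: "((\<lambda>t. gradF (w + t *\<^sub>R (x - w)) \<bullet> (x - w)) has_integral (F x - F w)) {0..1}"
    and grad_bound: "\<And>x. norm (gradF x) \<le> G"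
  shows "\<bar>F x - F w\<bar> \<le> G * norm (x - w)"
proof -
  have "norm (F x - F w) \<le> G * norm (x - w) * measure lborel {0..1::real}"
  proof (rule has_integral_bound_real[where S="{}"])
    have "0 \<le> G"
      using grad_bound[of 0] norm_ge_zero order_trans by blast
    then show "0 \<le> G * norm (x - w)" by simp
    fix t :: real
    have "norm (gradF (w + t *\<^sub>R (x - w)) \<bullet> (x - w)) \<le> norm (gradF (w + t *\<^sub>R (x - w))) * norm (x - w)"
      using Cauchy_Schwarz_ineq2 by simp
    also have "\<dots> \<le> G * norm (x - w)"
      using grad_bound by (simp add: mult_right_mono)
    finally show "norm (gradF (w + t *\<^sub>R (x - w)) \<bullet> (x - w)) \<le> G * norm (x - w)" .
  qed (use ftc in auto)
  then show ?thesis by simp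
qed

lemma nn_integral_le_imp_integrable:
  fixes f :: "'a \<Rightarrow> real"
  assumes f_meas: "f \<in> borel_measurable M" and f_nonneg: "\<And>x. 0 \<le> f x"
    and le: "(\<integral>\<^sup>+x. ennreal (f x) \<partial>M) \<le> ennreal c" and c: "0 \<le> c"
  shows "integrable M f" and "(\<integral>x. f x \<partial>M) \<le> c"
proof -
  have "(\<integral>\<^sup>+x. ennreal (norm (f x)) \<partial>M) < \<infinity>"
    using le f_nonneg by (simp add: le_less_trans[OF _ ennreal_less_top])
  then show int: "integrable M f"
    using f_meas by (simp add: integrable_iff_bounded)
  have "ennreal (\<integral>x. f x \<partial>M) = (\<integral>\<^sup>+x. ennreal (f x) \<partial>M)"
    using int f_nonneg by (intro nn_integral_eq_integral[symmetric]) auto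
  with le have "ennreal (\<integral>x. f x \<partial>M) \<le> ennreal c"
    by simp
  with c show "(\<integral>x. f x \<partial>M) \<le> c"
    by simp
qed

lemma (in finite_measure) integrable_if_square_norm_integrable:
  fixes f :: "'a \<Rightarrow> 'b::{banach, second_countable_topology}"
  assumes f_meas: "f \<in> borel_measurable M" and sq: "integrable M (\<lambda>x. (norm (f x))^2)"
  shows "integrable M f"
proof -
  have "integrable M (\<lambda>x. norm (f x))"
    by (rule square_integrable_imp_integrable) (use f_meas sq in auto)
  then show ?thesis
    using f_meas by (simp add: integrable_norm_iff)
qed

lemma abs_inner_le_norm_squares:
  fixes a b :: "'a::real_inner"
  shows "\<bar>a \<bullet> b\<bar> \<le> (norm a)^2 + (norm b)^2"
proof -
  have "\<bar>a \<bullet> b\<bar> \<le> norm a * norm b"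
    by (rule Cauchy_Schwarz_ineq2)
  moreover have "2 * (norm a * norm b) \<le> (norm a)^2 + (norm b)^2"
    using sum_squares_bound[of "norm a" "norm b"] by (simp add: power2_eq_square)
  moreover have "0 \<le> norm a * norm b" by simp
  ultimately show ?thesis by linarith
qed

lemma (in prob_space) integral_le_nonneg_const:
  fixes f :: "'a \<Rightarrow> real"
  assumes "\<And>x. x \<in> space M \<Longrightarrow> f x \<le> c" and "0 \<le> c"
  shows "(\<integral>x. f x \<partial>M) \<le> c"
proof (cases "integrable M f")
  case True
  then show ?thesis
    using assms by (intro integral_le_const AE_I2) auto
qed (use assms in \<open>simp add: not_integrable_integral_eq\<close>)

definition unif01 :: "real measure" where
  "unif01 = uniform_measure lborel {0..1}"

lemma prob_space_unif01: "prob_space unif01"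
  unfolding unif01_def by (rule prob_space_uniform_measure) auto

lemma sets_unif01 [simp, measurable_cong]: "sets unif01 = sets borel"
  unfolding unif01_def by simp

lemma space_unif01 [simp]: "space unif01 = UNIV"
  unfolding unif01_def by simp

lemma AE_unif01: "AE a in unif01. 0 \<le> a \<and> a \<le> 1"
  unfolding unif01_def by (rule AE_uniform_measureI) auto

lemma integral_unif01_eq_has_integral:
  fixes h :: "real \<Rightarrow> real"
  assumes h_meas: "h \<in> borel_measurable borel" and h_bound: "\<And>a. \<bar>h a\<bar> \<le> B"
    and h_int: "(h has_integral I) {0..1}"
  shows "(\<integral>a. h a \<partial>unif01) = I"
proof -
  have unif01_density: "unif01 = density lborel (\<lambda>x. ennreal (indicator {0..1} x))"
    unfolding unif01_def uniform_measure_def by (simp add: ennreal_indicator divide_ennreal_def)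
  have "integrable lborel (\<lambda>a. indicator {0..1::real} a * B)"
    by (intro integrable_mult_left integrable_real_indicator) auto
  then have int: "integrable lborel (\<lambda>a. indicator {0..1} a *\<^sub>R h a)"
    by (rule Bochner_Integration.integrable_bound)
      (use h_meas h_bound in \<open>auto simp: indicator_def intro: order_trans[OF _ abs_ge_self]\<close>)
  have "((\<lambda>a. indicator {0..1} a *\<^sub>R h a) has_integral (\<integral>a. indicator {0..1} a *\<^sub>R h a \<partial>lborel)) UNIV"
    using has_integral_integral_lborel[OF int] .
  moreover have "(\<lambda>a. indicator {0..1} a *\<^sub>R h a) = (\<lambda>a. if a \<in> {0..1::real} then h a else 0)"
    by (auto simp: indicator_def)
  ultimately have "(h has_integral (\<integral>a. indicator {0..1} a *\<^sub>R h a \<partial>lborel)) {0..1}"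
    by (simp only: has_integral_restrict_UNIV)
  then have "(\<integral>a. indicator {0..1} a *\<^sub>R h a \<partial>lborel) = I"
    using h_int has_integral_unique by blast
  moreover have "(\<integral>a. h a \<partial>unif01) = (\<integral>a. indicator {0..1} a *\<^sub>R h a \<partial>lborel)"
    unfolding unif01_density by (rule integral_density) (use h_meas in auto)
  ultimately show ?thesis by simp
qed

lemma integral_pair_PiM_fun_upd:
  fixes h :: "'r \<times> ('i \<Rightarrow> 'm) \<Rightarrow> real"
  assumes R: "prob_space R" and M: "prob_space M" and I: "finite I" "t \<in> I"
    and h_int: "integrable (R \<Otimes>\<^sub>M PiM I (\<lambda>_. M)) h"
  shows "(\<integral>\<omega>. h \<omega> \<partial>(R \<Otimes>\<^sub>M PiM I (\<lambda>_. M))) =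
     (\<integral>\<rho>. (\<integral>x. (\<integral>z. h (\<rho>, x(t := z)) \<partial>M) \<partial>PiM (I - {t}) (\<lambda>_. M)) \<partial>R)"
proof -
  interpret R: prob_space R by fact
  interpret M: prob_space M by fact
  interpret P: product_sigma_finite "\<lambda>_. M" by standard
  interpret PI: prob_space "PiM I (\<lambda>_. M)" by (rule prob_space_PiM) (use M in auto)
  interpret PI': prob_space "PiM (I - {t}) (\<lambda>_. M)" by (rule prob_space_PiM) (use M in auto)
  interpret RP: pair_sigma_finite R "PiM I (\<lambda>_. M)" by standard
  have ins: "insert t (I - {t}) = I" using I by auto
  have h_meas: "h \<in> borel_measurable (R \<Otimes>\<^sub>M PiM I (\<lambda>_. M))" using h_int by auto
  have upd_meas: "(\<lambda>(x, z). x(t := z)) \<in> measurable (PiM (I - {t}) (\<lambda>_. M) \<Otimes>\<^sub>M M) (PiM I (\<lambda>_. M))"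
    using measurable_add_dim[where I="I - {t}" and M="\<lambda>_. M" and i=t] unfolding ins by simp
  have "(\<lambda>p. (snd (fst p), snd p)) \<in> measurable ((R \<Otimes>\<^sub>M PiM (I - {t}) (\<lambda>_. M)) \<Otimes>\<^sub>M M) (PiM (I - {t}) (\<lambda>_. M) \<Otimes>\<^sub>M M)"
    by measurable
  from measurable_comp[OF this upd_meas]
  have "(\<lambda>p. (fst (fst p), (snd (fst p))(t := snd p))) \<in> measurable ((R \<Otimes>\<^sub>M PiM (I - {t}) (\<lambda>_. M)) \<Otimes>\<^sub>M M) (R \<Otimes>\<^sub>M PiM I (\<lambda>_. M))"
    by (intro measurable_Pair) (auto simp: o_def)
  from measurable_comp[OF this h_meas]
  have "case_prod (\<lambda>p z. h (fst p, (snd p)(t := z))) \<in> borel_measurable ((R \<Otimes>\<^sub>M PiM (I - {t}) (\<lambda>_. M)) \<Otimes>\<^sub>M M)"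
    by (simp add: o_def case_prod_beta')
  from M.borel_measurable_lebesgue_integral[OF this]
  have "(\<lambda>(\<rho>, x). \<integral>z. h (\<rho>, x(t := z)) \<partial>M) \<in> borel_measurable (R \<Otimes>\<^sub>M PiM (I - {t}) (\<lambda>_. M))"
    by (simp add: case_prod_beta')
  then have inner_meas: "(\<lambda>\<rho>. \<integral>x. (\<integral>z. h (\<rho>, x(t := z)) \<partial>M) \<partial>PiM (I - {t}) (\<lambda>_. M)) \<in> borel_measurable R"
    using PI'.borel_measurable_lebesgue_integral[of "\<lambda>\<rho> x. \<integral>z. h (\<rho>, x(t := z)) \<partial>M"]
    by (simp add: case_prod_beta')
  have "(\<integral>\<omega>. h \<omega> \<partial>(R \<Otimes>\<^sub>M PiM I (\<lambda>_. M))) = (\<integral>\<rho>. (\<integral>x. h (\<rho>, x) \<partial>PiM I (\<lambda>_. M)) \<partial>R)"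
    using RP.integral_fst'[OF h_int] by simp
  also have "\<dots> = (\<integral>\<rho>. (\<integral>x. (\<integral>z. h (\<rho>, x(t := z)) \<partial>M) \<partial>PiM (I - {t}) (\<lambda>_. M)) \<partial>R)"
  proof (rule integral_cong_AE)
    show "AE \<rho> in R. (\<integral>x. h (\<rho>, x) \<partial>PiM I (\<lambda>_. M)) = (\<integral>x. (\<integral>z. h (\<rho>, x(t := z)) \<partial>M) \<partial>PiM (I - {t}) (\<lambda>_. M))"
      using RP.AE_integrable_fst'[OF h_int]
    proof eventually_elim
      case (elim \<rho>)
      then have "integrable (PiM (insert t (I - {t})) (\<lambda>_. M)) (\<lambda>x. h (\<rho>, x))" unfolding ins .
      from P.product_integral_insert[OF _ _ this] I show ?case unfolding ins by simp
    qed
  qed (use h_int inner_meas in measurable)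
  finally show ?thesis .
qed

lemma nn_integral_pair_PiM_fun_upd_le:
  fixes h :: "'r \<times> ('i \<Rightarrow> 'm) \<Rightarrow> ennreal"
  assumes R: "prob_space R" and M: "prob_space M" and I: "finite I" "t \<in> I"
    and h_meas: "h \<in> borel_measurable (R \<Otimes>\<^sub>M PiM I (\<lambda>_. M))"
    and le: "\<And>\<rho> x. \<rho> \<in> space R \<Longrightarrow> x \<in> space (PiM (I - {t}) (\<lambda>_. M)) \<Longrightarrow>
               (\<integral>\<^sup>+z. h (\<rho>, x(t := z)) \<partial>M) \<le> C"
  shows "(\<integral>\<^sup>+\<omega>. h \<omega> \<partial>(R \<Otimes>\<^sub>M PiM I (\<lambda>_. M))) \<le> C"
proof -
  interpret R: prob_space R by fact
  interpret M: prob_space M by fact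
  interpret P: product_sigma_finite "\<lambda>_. M" by standard
  interpret PI: prob_space "PiM I (\<lambda>_. M)" by (rule prob_space_PiM) (use M in auto)
  interpret PI': prob_space "PiM (I - {t}) (\<lambda>_. M)" by (rule prob_space_PiM) (use M in auto)
  have ins: "insert t (I - {t}) = I" using I by auto
  have "(\<integral>\<^sup>+\<omega>. h \<omega> \<partial>(R \<Otimes>\<^sub>M PiM I (\<lambda>_. M))) = (\<integral>\<^sup>+\<rho>. (\<integral>\<^sup>+x. h (\<rho>, x) \<partial>PiM I (\<lambda>_. M)) \<partial>R)"
    using PI.nn_integral_fst[OF h_meas] by simp
  also have "\<dots> \<le> (\<integral>\<^sup>+\<rho>. C \<partial>R)"
  proof (rule nn_integral_mono)
    fix \<rho> assume \<rho>: "\<rho> \<in> space R"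
    have "(\<lambda>x. h (\<rho>, x)) \<in> borel_measurable (PiM (insert t (I - {t})) (\<lambda>_. M))"
      unfolding ins using h_meas \<rho> by measurable
    from P.product_nn_integral_insert[OF _ _ this]
    have "(\<integral>\<^sup>+x. h (\<rho>, x) \<partial>PiM I (\<lambda>_. M)) = (\<integral>\<^sup>+x. (\<integral>\<^sup>+z. h (\<rho>, x(t := z)) \<partial>M) \<partial>PiM (I - {t}) (\<lambda>_. M))"
      using I unfolding ins by simp
    also have "\<dots> \<le> (\<integral>\<^sup>+x. C \<partial>PiM (I - {t}) (\<lambda>_. M))"
      by (rule nn_integral_mono) (use le \<rho> in auto)
    finally show "(\<integral>\<^sup>+x. h (\<rho>, x) \<partial>PiM I (\<lambda>_. M)) \<le> C"
      by (simp add: PI'.emeasure_space_1)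
  qed
  finally show ?thesis
    by (simp add: R.emeasure_space_1)
qed

section \<open>The \<open>\<lambda>\<close>-norm at a finite mixture\<close>

lemma lambda_norm_candidate_finite_mixture:
  fixes gradF :: "'a::euclidean_space \<Rightarrow> 'a" and ys :: "nat \<Rightarrow> 'a" and wt :: "nat \<Rightarrow> real"
  assumes gradF_meas: "gradF \<in> borel_measurable borel" and S: "finite S"
    and wt_nonneg: "\<And>s. s \<in> S \<Longrightarrow> 0 \<le> wt s" and wt_sum: "(\<Sum>s\<in>S. wt s) = 1"
    and m: "m = (\<Sum>s\<in>S. wt s *\<^sub>R ys s)"
  shows "norm (\<Sum>s\<in>S. wt s *\<^sub>R gradF (ys s)) + lam * (\<Sum>s\<in>S. wt s * (norm (ys s - m))^2) \<in>
     {norm (\<integral>w. gradF w \<partial>p) + lam * (\<integral>w. (norm (w - m))^2 \<partial>p) | p.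
        prob_space p \<and> sets p = sets borel \<and> integrable p (\<lambda>w. w) \<and> (\<integral>w. w \<partial>p) = m \<and>
        integrable p (\<lambda>w. (norm (w - m))^2) \<and> integrable p gradF}"
proof -
  define f where "f s = (if s \<in> S then wt s else 0)" for s
  have f_nonneg: "0 \<le> f s" for s unfolding f_def using wt_nonneg by auto
  have "(\<integral>\<^sup>+s. ennreal (f s) \<partial>count_space UNIV) = (\<Sum>s\<in>S. ennreal (f s))"
    by (rule nn_integral_count_space') (use S in \<open>auto simp: f_def\<close>)
  also have "\<dots> = ennreal (\<Sum>s\<in>S. f s)"
    using f_nonneg by (simp add: sum_ennreal)
  also have "\<dots> = 1"
    using wt_sum by (simp add: f_def)
  finally have "(\<integral>\<^sup>+s. ennreal (f s) \<partial>count_space UNIV) = 1" .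
  from pmf_embed_pmf[OF f_nonneg this]
  have pmf_q: "pmf (embed_pmf f) s = f s" for s .
  define q where "q = embed_pmf f"
  have set_q: "set_pmf q \<subseteq> S" using pmf_q by (auto simp: q_def set_pmf_eq f_def)
  define p where "p = distr (measure_pmf q) borel ys"
  have ys_meas: "ys \<in> measurable (measure_pmf q) borel" by simp
  have integrable_p: "integrable p h" if "h \<in> borel_measurable borel"
    for h :: "'a \<Rightarrow> 'b::{banach, second_countable_topology}"
    unfolding p_def using that integrable_measure_pmf_finite[OF finite_subset[OF set_q S]]
    by (subst integrable_distr_eq[OF ys_meas]) auto
  have integral_p: "(\<integral>w. h w \<partial>p) = (\<Sum>s\<in>S. wt s *\<^sub>R h (ys s))" if "h \<in> borel_measurable borel"
    for h :: "'a \<Rightarrow> 'b::{banach, second_countable_topology}"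
  proof -
    have "(\<integral>w. h w \<partial>p) = (\<integral>s. h (ys s) \<partial>measure_pmf q)"
      unfolding p_def using that by (subst integral_distr[OF ys_meas]) auto
    also have "\<dots> = (\<Sum>s\<in>S. pmf q s *\<^sub>R h (ys s))"
      by (rule integral_measure_pmf[OF S]) (use set_q in auto)
    finally show ?thesis by (simp add: q_def pmf_q f_def)
  qed
  have "prob_space p"
    unfolding p_def by (rule prob_space.prob_space_distr) (auto simp: measure_pmf.prob_space_axioms)
  moreover have "sets p = sets borel"
    unfolding p_def by simp
  moreover have "(\<integral>w. w \<partial>p) = m"
    using integral_p[of "\<lambda>w. w"] m by simp
  moreover have "(\<integral>w. (norm (w - m))^2 \<partial>p) = (\<Sum>s\<in>S. wt s * (norm (ys s - m))^2)"
    using integral_p[of "\<lambda>w. (norm (w - m))^2"] by simp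
  moreover have "integrable p (\<lambda>w. w)" "integrable p (\<lambda>w. (norm (w - m))^2)"
    by (rule integrable_p; measurable)+
  ultimately show ?thesis
    using integral_p[OF gradF_meas] integrable_p[OF gradF_meas]
    by (intro CollectI exI[of _ p]) simp
qed

lemma lambda_norm_le_finite_mixture:
  fixes gradF :: "'a::euclidean_space \<Rightarrow> 'a" and ys :: "nat \<Rightarrow> 'a" and wt :: "nat \<Rightarrow> real"
  assumes gradF_meas: "gradF \<in> borel_measurable borel" and S: "finite S"
    and wt_nonneg: "\<And>s. s \<in> S \<Longrightarrow> 0 \<le> wt s" and wt_sum: "(\<Sum>s\<in>S. wt s) = 1" and lam: "0 \<le> lam"
    and m: "m = (\<Sum>s\<in>S. wt s *\<^sub>R ys s)"
  shows "lambda_norm gradF lam m \<le>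
     norm (\<Sum>s\<in>S. wt s *\<^sub>R gradF (ys s)) + lam * (\<Sum>s\<in>S. wt s * (norm (ys s - m))^2)"
  unfolding lambda_norm_def
proof (rule cInf_lower)
  show "bdd_below {norm (\<integral>w. gradF w \<partial>p) + lam * (\<integral>w. (norm (w - m))^2 \<partial>p) | p.
        prob_space p \<and> sets p = sets borel \<and> integrable p (\<lambda>w. w) \<and> (\<integral>w. w \<partial>p) = m \<and>
        integrable p (\<lambda>w. (norm (w - m))^2) \<and> integrable p gradF}"
    by (rule bdd_belowI[where m=0]) (use lam in \<open>auto intro!: add_nonneg_nonneg mult_nonneg_nonneg integral_nonneg_AE\<close>)
qed (rule lambda_norm_candidate_finite_mixture[OF assms(1-4,6)])

lemma lambda_norm_nonneg:
  fixes gradF :: "'a::euclidean_space \<Rightarrow> 'a"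
  assumes gradF_meas: "gradF \<in> borel_measurable borel" and lam: "0 \<le> lam"
  shows "0 \<le> lambda_norm gradF lam x"
  unfolding lambda_norm_def
proof (rule cInf_greatest)
  show "{norm (\<integral>w. gradF w \<partial>p) + lam * (\<integral>w. (norm (w - x))^2 \<partial>p) | p.
        prob_space p \<and> sets p = sets borel \<and> integrable p (\<lambda>w. w) \<and> (\<integral>w. w \<partial>p) = x \<and>
        integrable p (\<lambda>w. (norm (w - x))^2) \<and> integrable p gradF} \<noteq> {}"
    using lambda_norm_candidate_finite_mixture[OF gradF_meas, of "{0}" "\<lambda>_. 1" x "\<lambda>_. x"] by auto
qed (use lam in \<open>auto intro!: add_nonneg_nonneg mult_nonneg_nonneg integral_nonneg_AE\<close>)

lemma weighted_variance_le:
  fixes ys :: "nat \<Rightarrow> 'a::real_inner" and wt :: "nat \<Rightarrow> real"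
  assumes wt_sum: "(\<Sum>s\<in>S. wt s) = 1" and m: "m = (\<Sum>s\<in>S. wt s *\<^sub>R ys s)"
  shows "(\<Sum>s\<in>S. wt s * (norm (ys s - m))^2) = (\<Sum>s\<in>S. wt s * (norm (ys s - c))^2) - (norm (m - c))^2"
proof -
  have cross: "(\<Sum>s\<in>S. wt s * ((ys s - m) \<bullet> (m - c))) = 0"
  proof -
    have "(\<Sum>s\<in>S. wt s *\<^sub>R (ys s - m)) = m - (\<Sum>s\<in>S. wt s) *\<^sub>R m"
      by (simp add: m scaleR_diff_right sum_subtractf scaleR_sum_left)
    then have "(\<Sum>s\<in>S. wt s *\<^sub>R (ys s - m)) = 0"
      using wt_sum by simp
    moreover have "(\<Sum>s\<in>S. wt s * ((ys s - m) \<bullet> (m - c))) = (\<Sum>s\<in>S. wt s *\<^sub>R (ys s - m)) \<bullet> (m - c)"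
      by (simp add: inner_sum_left)
    ultimately show ?thesis by simp
  qed
  have split: "(norm (ys s - c))^2 = (norm (ys s - m))^2 + 2 * ((ys s - m) \<bullet> (m - c)) + (norm (m - c))^2" for s
  proof -
    have "(norm (a + b))^2 = (norm a)^2 + 2 * (a \<bullet> b) + (norm b)^2" for a b :: 'a
      by (simp add: power2_norm_eq_inner inner_add_left inner_add_right inner_commute)
    from this[of "ys s - m" "m - c"] show ?thesis by simp
  qed
  have distrib: "\<And>v a b d::real. v * (a + 2 * b + d) = v * a + 2 * (v * b) + v * d"
    by (simp add: algebra_simps)
  have "(\<Sum>s\<in>S. wt s * (norm (ys s - c))^2) = (\<Sum>s\<in>S. wt s * (norm (ys s - m))^2)
      + 2 * (\<Sum>s\<in>S. wt s * ((ys s - m) \<bullet> (m - c))) + (\<Sum>s\<in>S. wt s) * (norm (m - c))^2"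
    unfolding split distrib
    by (simp only: sum.distrib sum_distrib_left[symmetric] sum_distrib_right[symmetric])
  then show ?thesis
    using cross wt_sum by simp
qed

section \<open>Discounted sums and the law of \<open>\<tau>\<close>\<close>

definition disc_sum :: "real \<Rightarrow> (nat \<Rightarrow> real) \<Rightarrow> nat \<Rightarrow> real" where
  "disc_sum \<beta> a t = (\<Sum>s=1..t. \<beta>^(t-s) * a s)"

definition tau_weight :: "real \<Rightarrow> nat \<Rightarrow> nat \<Rightarrow> real" where
  "tau_weight \<beta> T t = (if t < T then 1 - \<beta> else 1)"

lemma disc_sum_0 [simp]: "disc_sum \<beta> a 0 = 0"
  by (simp add: disc_sum_def)

lemma disc_sum_Suc: "disc_sum \<beta> a (Suc t) = \<beta> * disc_sum \<beta> a t + a (Suc t)"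
proof -
  have "(\<Sum>s=1..t. \<beta>^(Suc t - s) * a s) = \<beta> * (\<Sum>s=1..t. \<beta>^(t - s) * a s)"
    by (auto simp: sum_distrib_left Suc_diff_le mult.assoc intro!: sum.cong)
  then show ?thesis
    by (simp add: disc_sum_def sum.atLeast1_atMost_eq)
qed

lemma sum_tau_weight_mult:
  assumes "1 \<le> T"
  shows "(\<Sum>t=1..T. tau_weight \<beta> T t * X t) = (1 - \<beta>) * (\<Sum>t\<in>{1..<T}. X t) + X T"
proof -
  have "{1..T} = insert T {1..<T}" using assms by auto
  then show ?thesis
    by (simp add: tau_weight_def sum_distrib_left)
qed

text \<open>Discounting and re-weighting by \<open>tau_weight\<close> cancel: the weights \<open>tau_weight\<close> are chosen so
  that every round is counted exactly once.\<close>
lemma sum_tau_weight_disc_sum: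
  assumes "1 \<le> T"
  shows "(\<Sum>t=1..T. tau_weight \<beta> T t * disc_sum \<beta> a t) = (\<Sum>s=1..T. a s)"
proof -
  have telescope: "(1 - \<beta>) * (\<Sum>t<n. disc_sum \<beta> a t) + disc_sum \<beta> a n = (\<Sum>s=1..n. a s)" for n
  proof (induction n)
    case (Suc n)
    have "(1 - \<beta>) * (\<Sum>t<Suc n. disc_sum \<beta> a t) + disc_sum \<beta> a (Suc n)
        = ((1 - \<beta>) * (\<Sum>t<n. disc_sum \<beta> a t) + disc_sum \<beta> a n) + a (Suc n)"
      by (simp add: disc_sum_Suc algebra_simps)
    then show ?case using Suc by simp
  qed simp
  have "{..<T} = insert 0 {1..<T}" using assms by auto
  then show ?thesis
    using telescope[of T] sum_tau_weight_mult[OF assms] by simp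
qed

lemma disc_sum_one:
  assumes "\<beta> \<noteq> 1"
  shows "disc_sum \<beta> (\<lambda>_. 1) t = (1 - \<beta>^t) / (1 - \<beta>)"
proof (induction t)
  case (Suc t)
  have "disc_sum \<beta> (\<lambda>_. 1) (Suc t) = \<beta> * ((1 - \<beta>^t) / (1 - \<beta>)) + 1"
    by (simp add: disc_sum_Suc Suc.IH)
  also have "\<dots> = (1 - \<beta>^Suc t) / (1 - \<beta>)"
    using assms by (simp add: field_simps)
  finally show ?case .
qed simp

lemma disc_sum_one_ge_1:
  assumes "0 \<le> \<beta>" "1 \<le> t"
  shows "1 \<le> disc_sum \<beta> (\<lambda>_. 1) t"
proof -
  have "(\<Sum>s\<in>{t}. \<beta>^(t-s)) \<le> (\<Sum>s=1..t. \<beta>^(t-s))"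
    using assms by (intro sum_mono2) auto
  then show ?thesis by (simp add: disc_sum_def)
qed

lemma tau_prob_eq_tau_weight:
  assumes "\<beta> < 1" "t \<in> {1..T}"
  shows "tau_prob \<beta> T t = tau_weight \<beta> T t * disc_sum \<beta> (\<lambda>_. 1) t / real T"
  using assms by (auto simp: disc_sum_one tau_prob_def tau_weight_def)

lemma sum_tau_weight_le:
  assumes "1 \<le> T" "\<beta> \<le> 1"
  shows "(\<Sum>t=1..T. tau_weight \<beta> T t) \<le> real T * (1 - \<beta>) + 1"
  using sum_tau_weight_mult[OF assms(1), of \<beta> "\<lambda>_. 1"] assms by (simp add: of_nat_diff algebra_simps)

lemma sum_power_square_le:
  fixes \<beta> :: real
  assumes "0 \<le> \<beta>" "\<beta> < 1"
  shows "(\<Sum>s=1..t. (\<beta>^(t-s))^2) \<le> 1 / (1 - \<beta>)"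
proof -
  have "(\<Sum>s=1..t. (\<beta>^(t-s))^2) \<le> (\<Sum>s=1..t. \<beta>^(t-s))"
  proof (rule sum_mono)
    fix s
    have "\<beta>^(t-s) * \<beta>^(t-s) \<le> 1 * \<beta>^(t-s)"
      using assms by (intro mult_right_mono power_le_one) auto
    then show "(\<beta>^(t-s))^2 \<le> \<beta>^(t-s)" by (simp add: power2_eq_square)
  qed
  also have "\<dots> = (1 - \<beta>^t) / (1 - \<beta>)"
    using disc_sum_one[of \<beta> t] assms by (simp add: disc_sum_def)
  also have "\<dots> \<le> 1 / (1 - \<beta>)"
    using assms by (intro divide_right_mono) auto
  finally show ?thesis .
qed

section \<open>A stochastic gradient oracle queried at a uniform point of a segment\<close>

locale stochastic_gradient_oracle =
  fixes F :: "'a::euclidean_space \<Rightarrow> real" and gradF :: "'a \<Rightarrow> 'a"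
    and G \<sigma> :: real and Xi :: "'e measure" and Orc :: "'a \<Rightarrow> 'e \<Rightarrow> 'a"
  assumes grad: "\<And>x. (F has_derivative (\<lambda>h. gradF x \<bullet> h)) (at x)"
    and ftc: "\<And>x w. ((\<lambda>t. gradF (w + t *\<^sub>R (x - w)) \<bullet> (x - w)) has_integral (F x - F w)) {0..1}"
    and grad_bound: "\<And>x. norm (gradF x) \<le> G"
    and sigma_nonneg: "\<sigma> \<ge> 0"
    and Xi_prob: "prob_space Xi"
    and O_meas: "(\<lambda>p. Orc (fst p) (snd p)) \<in> borel_measurable (borel \<Otimes>\<^sub>M Xi)"
    and O_unbiased: "\<And>x. integrable Xi (Orc x) \<and> (\<integral>\<xi>. Orc x \<xi> \<partial>Xi) = gradF x"
    and O_variance: "\<And>x. integrable Xi (\<lambda>\<xi>. (norm (Orc x \<xi> - gradF x))^2) \<and>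
                         (\<integral>\<xi>. (norm (Orc x \<xi> - gradF x))^2 \<partial>Xi) \<le> \<sigma>^2"
begin

sublocale Xi: prob_space Xi by (rule Xi_prob)

text \<open>The randomness of a single round: the position \<open>s\<^sub>t\<close> on the segment and the oracle noise.\<close>
definition round_space :: "(real \<times> 'e) measure" where
  "round_space = unif01 \<Otimes>\<^sub>M Xi"

lemma prob_space_round_space: "prob_space round_space"
  unfolding round_space_def using prob_space_unif01 Xi_prob by (intro prob_space_pair) auto

lemma G_nonneg: "0 \<le> G"
  using grad_bound[of 0] norm_ge_zero order_trans by blast

lemma gradF_measurable [measurable]: "gradF \<in> borel_measurable borel"
  using borel_measurable_gradient grad by blast

lemma F_measurable [measurable]: "F \<in> borel_measurable borel"
proof -
  have "continuous_on UNIV F"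
    using grad has_derivative_continuous continuous_at_imp_continuous_on by blast
  then show ?thesis
    using borel_measurable_continuous_onI by blast
qed

lemma F_lipschitz: "\<bar>F x - F w\<bar> \<le> G * norm (x - w)"
  using lipschitz_bound_of_gradient_bound[OF ftc grad_bound] .

lemma AE_round_space_unit: "AE z in round_space. 0 \<le> fst z \<and> fst z \<le> 1"
proof -
  interpret unif01: prob_space unif01 by (rule prob_space_unif01)
  interpret pair_sigma_finite unif01 Xi ..
  show ?thesis
    unfolding round_space_def
  proof (rule AE_pair_measure)
    show "AE a in unif01. AE \<xi> in Xi. 0 \<le> fst (a, \<xi>) \<and> fst (a, \<xi>) \<le> 1"
      using AE_unif01 by (auto elim: eventually_mono)
  qed measurable
qed

lemma oracle_segment_measurable:
  "(\<lambda>z. Orc (x0 + fst z *\<^sub>R D) (snd z)) \<in> borel_measurable round_space"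
proof -
  have "(\<lambda>z. (x0 + fst z *\<^sub>R D, snd z)) \<in> measurable round_space (borel \<Otimes>\<^sub>M Xi)"
    unfolding round_space_def by measurable
  from measurable_comp[OF this O_meas] show ?thesis by (simp add: o_def)
qed

lemma oracle_noise_segment_measurable:
  "(\<lambda>z. Orc (x0 + fst z *\<^sub>R D) (snd z) - gradF (x0 + fst z *\<^sub>R D)) \<in> borel_measurable round_space"
proof -
  have "(\<lambda>z. gradF (x0 + fst z *\<^sub>R D)) \<in> borel_measurable round_space"
    unfolding round_space_def by measurable
  then show ?thesis using oracle_segment_measurable by measurable
qed

lemma nn_integral_oracle_noise_segment_le:
  "(\<integral>\<^sup>+z. ennreal ((norm (Orc (x0 + fst z *\<^sub>R D) (snd z) - gradF (x0 + fst z *\<^sub>R D)))^2) \<partial>round_space)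
     \<le> ennreal (\<sigma>^2)"
proof -
  interpret unif01: prob_space unif01 by (rule prob_space_unif01)
  have "(\<lambda>z. ennreal ((norm (Orc (x0 + fst z *\<^sub>R D) (snd z) - gradF (x0 + fst z *\<^sub>R D)))^2))
          \<in> borel_measurable (unif01 \<Otimes>\<^sub>M Xi)"
    using oracle_noise_segment_measurable[of x0 D] unfolding round_space_def by measurable
  from Xi.nn_integral_fst[OF this]
  have "(\<integral>\<^sup>+z. ennreal ((norm (Orc (x0 + fst z *\<^sub>R D) (snd z) - gradF (x0 + fst z *\<^sub>R D)))^2) \<partial>round_space)
     = (\<integral>\<^sup>+a. (\<integral>\<^sup>+\<xi>. ennreal ((norm (Orc (x0 + a *\<^sub>R D) \<xi> - gradF (x0 + a *\<^sub>R D)))^2) \<partial>Xi) \<partial>unif01)"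
    unfolding round_space_def by simp
  also have "\<dots> \<le> (\<integral>\<^sup>+a. ennreal (\<sigma>^2) \<partial>unif01)"
  proof (rule nn_integral_mono)
    fix a
    let ?y = "x0 + a *\<^sub>R D"
    have "(\<integral>\<^sup>+\<xi>. ennreal ((norm (Orc ?y \<xi> - gradF ?y))^2) \<partial>Xi) = ennreal (\<integral>\<xi>. (norm (Orc ?y \<xi> - gradF ?y))^2 \<partial>Xi)"
      using O_variance[of ?y] by (intro nn_integral_eq_integral) auto
    also have "\<dots> \<le> ennreal (\<sigma>^2)"
      using O_variance[of ?y] by (intro ennreal_leI) auto
    finally show "(\<integral>\<^sup>+\<xi>. ennreal ((norm (Orc ?y \<xi> - gradF ?y))^2) \<partial>Xi) \<le> ennreal (\<sigma>^2)" .
  qed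
  also have "\<dots> = ennreal (\<sigma>^2)"
    using unif01.emeasure_space_1 by simp
  finally show ?thesis .
qed

lemma integrable_oracle_noise_segment:
  "integrable round_space (\<lambda>z. Orc (x0 + fst z *\<^sub>R D) (snd z) - gradF (x0 + fst z *\<^sub>R D))"
proof -
  interpret round_space: prob_space round_space by (rule prob_space_round_space)
  have "integrable round_space
      (\<lambda>z. (norm (Orc (x0 + fst z *\<^sub>R D) (snd z) - gradF (x0 + fst z *\<^sub>R D)))^2)"
    using oracle_noise_segment_measurable[of x0 D]
    by (intro nn_integral_le_imp_integrable(1)[OF _ _ nn_integral_oracle_noise_segment_le]) auto
  with oracle_noise_segment_measurable show ?thesis
    by (rule round_space.integrable_if_square_norm_integrable)
qed

lemma integrable_oracle_segment:
  "integrable round_space (\<lambda>z. Orc (x0 + fst z *\<^sub>R D) (snd z))"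
proof -
  interpret round_space: prob_space round_space by (rule prob_space_round_space)
  have "integrable round_space (\<lambda>z. gradF (x0 + fst z *\<^sub>R D))"
    by (rule round_space.integrable_const_bound[where B=G]) (auto simp: grad_bound round_space_def)
  from Bochner_Integration.integrable_add[OF integrable_oracle_noise_segment[of x0 D] this]
  show ?thesis by simp
qed

text \<open>Since \<open>s\<^sub>t\<close> is uniform on \<open>[0,1]\<close>, an unbiased gradient at \<open>x\<^sub>0 + s\<^sub>t \<Delta>\<close> integrates
  against \<open>\<Delta>\<close> to the exact increment of \<open>F\<close>.\<close>
lemma integral_oracle_segment_inner:
  "(\<integral>z. Orc (x0 + fst z *\<^sub>R D) (snd z) \<bullet> D \<partial>round_space) = F (x0 + D) - F x0"
proof -
  interpret unif01: prob_space unif01 by (rule prob_space_unif01)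
  interpret pair_sigma_finite unif01 Xi ..
  have "integrable (unif01 \<Otimes>\<^sub>M Xi) (\<lambda>z. Orc (x0 + fst z *\<^sub>R D) (snd z) \<bullet> D)"
    using integrable_oracle_segment[of x0 D] unfolding round_space_def by auto
  from integral_fst'[OF this]
  have "(\<integral>z. Orc (x0 + fst z *\<^sub>R D) (snd z) \<bullet> D \<partial>round_space) = (\<integral>a. (\<integral>\<xi>. Orc (x0 + a *\<^sub>R D) \<xi> \<bullet> D \<partial>Xi) \<partial>unif01)"
    unfolding round_space_def by simp
  also have "\<dots> = (\<integral>a. gradF (x0 + a *\<^sub>R D) \<bullet> D \<partial>unif01)"
    using O_unbiased by simp
  also have "\<dots> = F (x0 + D) - F x0"
  proof (rule integral_unif01_eq_has_integral)
    show "\<bar>gradF (x0 + a *\<^sub>R D) \<bullet> D\<bar> \<le> G * norm D" for a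
    proof -
      have "\<bar>gradF (x0 + a *\<^sub>R D) \<bullet> D\<bar> \<le> norm (gradF (x0 + a *\<^sub>R D)) * norm D"
        by (rule Cauchy_Schwarz_ineq2)
      also have "\<dots> \<le> G * norm D"
        using grad_bound by (simp add: mult_right_mono)
      finally show ?thesis .
    qed
    show "((\<lambda>a. gradF (x0 + a *\<^sub>R D) \<bullet> D) has_integral F (x0 + D) - F x0) {0..1}"
      using ftc[where x="x0 + D" and w=x0] by (simp only: add_diff_cancel_left')
  qed measurable
  finally show ?thesis .
qed

lemma integral_inner_oracle_noise_segment:
  "(\<integral>z. c \<bullet> (Orc (x0 + fst z *\<^sub>R D) (snd z) - gradF (x0 + fst z *\<^sub>R D)) \<partial>round_space) = 0"
proof -
  interpret unif01: prob_space unif01 by (rule prob_space_unif01)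
  interpret pair_sigma_finite unif01 Xi ..
  have "integrable (unif01 \<Otimes>\<^sub>M Xi) (\<lambda>z. c \<bullet> (Orc (x0 + fst z *\<^sub>R D) (snd z) - gradF (x0 + fst z *\<^sub>R D)))"
    using integrable_oracle_noise_segment[of x0 D] unfolding round_space_def by auto
  from integral_fst'[OF this]
  have "(\<integral>z. c \<bullet> (Orc (x0 + fst z *\<^sub>R D) (snd z) - gradF (x0 + fst z *\<^sub>R D)) \<partial>round_space)
     = (\<integral>a. (\<integral>\<xi>. c \<bullet> (Orc (x0 + a *\<^sub>R D) \<xi> - gradF (x0 + a *\<^sub>R D)) \<partial>Xi) \<partial>unif01)"
    unfolding round_space_def by simp
  also have "\<dots> = 0"
  proof -
    have "(\<integral>\<xi>. c \<bullet> (Orc y \<xi> - gradF y) \<partial>Xi) = 0" for y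
      using O_unbiased[of y] by (simp add: Bochner_Integration.integral_diff Xi.prob_space)
    then show ?thesis by simp
  qed
  finally show ?thesis .
qed

end

section \<open>The conversion run with \<open>x\<^sub>t = x\<^sub>0\<close>\<close>

lemma conv_grads_cong:
  assumes "fst \<omega> = fst \<omega>'" "\<And>j. 1 \<le> j \<Longrightarrow> j \<le> n \<Longrightarrow> snd \<omega> j = snd \<omega>' j"
  shows "conv_grads A Orc x0 mu \<omega> n = conv_grads A Orc x0 mu \<omega>' n"
  using assms(2) by (induction n) (auto simp: Let_def assms(1))

lemma conv_Delta_fun_upd:
  assumes "s \<le> t"
  shows "conv_Delta A Orc x0 mu (\<rho>, x(t := z)) s = conv_Delta A Orc x0 mu (\<rho>, x) s"
proof -
  have "conv_grads A Orc x0 mu (\<rho>, x(t := z)) (s - 1) = conv_grads A Orc x0 mu (\<rho>, x) (s - 1)"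
    by (rule conv_grads_cong) (use assms in auto)
  then show ?thesis unfolding conv_Delta_def by simp
qed

lemma conv_y_fun_upd_less:
  assumes "s < t"
  shows "conv_y A Orc x0 mu (\<rho>, x(t := z)) s = conv_y A Orc x0 mu (\<rho>, x) s"
  using assms conv_Delta_fun_upd[of s t A Orc x0 mu \<rho> x z] unfolding conv_y_def by simp

lemma conv_g_fun_upd_less:
  assumes "s < t"
  shows "conv_g A Orc x0 mu (\<rho>, x(t := z)) s = conv_g A Orc x0 mu (\<rho>, x) s"
  using assms conv_y_fun_upd_less[of s t A Orc x0 mu \<rho> x z] unfolding conv_g_def by simp

lemma conv_y_fun_upd_self:
  "conv_y A Orc x0 mu (\<rho>, x(t := z)) t = x0 + fst z *\<^sub>R conv_Delta A Orc x0 mu (\<rho>, x) t"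
  using conv_Delta_fun_upd[of t t A Orc x0 mu \<rho> x z] unfolding conv_y_def by simp

lemma conv_g_fun_upd_self:
  "conv_g A Orc x0 mu (\<rho>, x(t := z)) t = Orc (x0 + fst z *\<^sub>R conv_Delta A Orc x0 mu (\<rho>, x) t) (snd z)"
  using conv_y_fun_upd_self[of A Orc x0 mu \<rho> x t z] unfolding conv_g_def by simp

lemma conv_w_fun_upd_self:
  "conv_w A Orc x0 mu (\<rho>, x(t := z)) t = conv_w A Orc x0 mu (\<rho>, x) t"
  using conv_Delta_fun_upd[of t t A Orc x0 mu \<rho> x z] unfolding conv_w_def by simp

locale conversion_run = stochastic_gradient_oracle F gradF G \<sigma> Xi Orc
  for F :: "'a::euclidean_space \<Rightarrow> real" and gradF G \<sigma> and Xi :: "'e measure" and Orc +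
  fixes R :: "'r measure" and A :: "'r \<Rightarrow> ('a \<Rightarrow> real) list \<Rightarrow> 'a" and x0 :: 'a
    and mu :: real and T :: nat
  assumes R_prob: "prob_space R"
    and Delta_meas: "\<And>t. t \<in> {1..T} \<Longrightarrow> (\<lambda>\<omega>. conv_Delta A Orc x0 mu \<omega> t) \<in> borel_measurable (conv_space R Xi T)"
begin

abbreviation "\<Omega> \<equiv> conv_space R Xi T"
abbreviation "\<Delta> \<omega> t \<equiv> conv_Delta A Orc x0 mu \<omega> t"
abbreviation "y \<omega> t \<equiv> conv_y A Orc x0 mu \<omega> t"
abbreviation "g \<omega> t \<equiv> conv_g A Orc x0 mu \<omega> t"
abbreviation "w \<omega> t \<equiv> conv_w A Orc x0 mu \<omega> t"

definition noise :: "'r \<times> (nat \<Rightarrow> real \<times> 'e) \<Rightarrow> nat \<Rightarrow> 'a" where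
  "noise \<omega> t = g \<omega> t - gradF (y \<omega> t)"

lemma conv_space_eq: "\<Omega> = R \<Otimes>\<^sub>M PiM {1..T} (\<lambda>_. round_space)"
  unfolding conv_space_def round_space_def unif01_def ..

sublocale \<Omega>: prob_space \<Omega>
  unfolding conv_space_eq using R_prob prob_space_round_space
  by (intro prob_space_pair prob_space_PiM) auto

lemma round_measurable: "t \<in> {1..T} \<Longrightarrow> (\<lambda>\<omega>. snd \<omega> t) \<in> measurable \<Omega> round_space"
  unfolding conv_space_eq by measurable

lemma y_measurable: "t \<in> {1..T} \<Longrightarrow> (\<lambda>\<omega>. y \<omega> t) \<in> borel_measurable \<Omega>"
  using measurable_comp[OF round_measurable[unfolded round_space_def] measurable_fst] Delta_meas
  unfolding conv_y_def by (simp add: o_def cong: measurable_cong_sets)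

lemma g_measurable: "t \<in> {1..T} \<Longrightarrow> (\<lambda>\<omega>. g \<omega> t) \<in> borel_measurable \<Omega>"
proof -
  assume t: "t \<in> {1..T}"
  have "(\<lambda>\<omega>. snd (snd \<omega> t)) \<in> measurable \<Omega> Xi"
    using measurable_comp[OF round_measurable[OF t, unfolded round_space_def] measurable_snd]
    by (simp add: o_def)
  then have "(\<lambda>\<omega>. (y \<omega> t, snd (snd \<omega> t))) \<in> measurable \<Omega> (borel \<Otimes>\<^sub>M Xi)"
    using y_measurable[OF t] by (intro measurable_Pair) auto
  from measurable_comp[OF this O_meas] show ?thesis
    unfolding conv_g_def by (simp add: o_def)
qed

lemma noise_measurable: "t \<in> {1..T} \<Longrightarrow> (\<lambda>\<omega>. noise \<omega> t) \<in> borel_measurable \<Omega>"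
  unfolding noise_def using g_measurable y_measurable by measurable

lemma w_measurable: "t \<in> {1..T} \<Longrightarrow> (\<lambda>\<omega>. w \<omega> t) \<in> borel_measurable \<Omega>"
  unfolding conv_w_def using Delta_meas by measurable

lemma AE_unit_steps: "AE \<omega> in \<Omega>. \<forall>s\<in>{1..T}. 0 \<le> fst (snd \<omega> s) \<and> fst (snd \<omega> s) \<le> 1"
proof (subst AE_finite_all[OF finite_atLeastAtMost], intro ballI)
  interpret R: prob_space R by (rule R_prob)
  interpret P: prob_space "PiM {1..T} (\<lambda>_. round_space)"
    using prob_space_round_space by (intro prob_space_PiM) auto
  interpret pair_sigma_finite R "PiM {1..T} (\<lambda>_. round_space)" ..
  fix s :: nat assume s: "s \<in> {1..T}"
  have "AE x in PiM {1..T} (\<lambda>_. round_space). 0 \<le> fst (x s) \<and> fst (x s) \<le> 1"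
    using prob_space_round_space s AE_round_space_unit by (rule AE_PiM_component)
  show "AE \<omega> in \<Omega>. 0 \<le> fst (snd \<omega> s) \<and> fst (snd \<omega> s) \<le> 1"
    unfolding conv_space_eq
  proof (rule AE_pair_measure)
    show "AE \<rho> in R. AE x in PiM {1..T} (\<lambda>_. round_space). 0 \<le> fst (snd (\<rho>, x) s) \<and> fst (snd (\<rho>, x) s) \<le> 1"
      using \<open>AE x in PiM {1..T} (\<lambda>_. round_space). 0 \<le> fst (x s) \<and> fst (x s) \<le> 1\<close> by simp
    show "{\<omega> \<in> space (R \<Otimes>\<^sub>M PiM {1..T} (\<lambda>_. round_space)). 0 \<le> fst (snd \<omega> s) \<and> fst (snd \<omega> s) \<le> 1}
        \<in> sets (R \<Otimes>\<^sub>M PiM {1..T} (\<lambda>_. round_space))"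
      using s unfolding round_space_def by measurable
  qed
qed

lemma noise_second_moment:
  assumes t: "t \<in> {1..T}"
  shows "integrable \<Omega> (\<lambda>\<omega>. (norm (noise \<omega> t))^2)" and "(\<integral>\<omega>. (norm (noise \<omega> t))^2 \<partial>\<Omega>) \<le> \<sigma>^2"
proof -
  have meas: "(\<lambda>\<omega>. (norm (noise \<omega> t))^2) \<in> borel_measurable \<Omega>"
    using noise_measurable[OF t] by measurable
  have "(\<integral>\<^sup>+\<omega>. ennreal ((norm (noise \<omega> t))^2) \<partial>\<Omega>) \<le> ennreal (\<sigma>^2)"
    unfolding conv_space_eq
  proof (rule nn_integral_pair_PiM_fun_upd_le[OF R_prob prob_space_round_space _ t])
    show "(\<lambda>\<omega>. ennreal ((norm (noise \<omega> t))^2)) \<in> borel_measurable (R \<Otimes>\<^sub>M PiM {1..T} (\<lambda>_. round_space))"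
      using noise_measurable[OF t] unfolding conv_space_eq by measurable
    fix \<rho> x
    have "noise (\<rho>, x(t := z)) t = Orc (x0 + fst z *\<^sub>R \<Delta> (\<rho>, x) t) (snd z) - gradF (x0 + fst z *\<^sub>R \<Delta> (\<rho>, x) t)" for z
      unfolding noise_def conv_g_fun_upd_self conv_y_fun_upd_self ..
    then show "(\<integral>\<^sup>+z. ennreal ((norm (noise (\<rho>, x(t := z)) t))^2) \<partial>round_space) \<le> ennreal (\<sigma>^2)"
      using nn_integral_oracle_noise_segment_le[of x0 "\<Delta> (\<rho>, x) t"] by simp
  qed simp
  from nn_integral_le_imp_integrable[OF meas _ this]
  show "integrable \<Omega> (\<lambda>\<omega>. (norm (noise \<omega> t))^2)" "(\<integral>\<omega>. (norm (noise \<omega> t))^2 \<partial>\<Omega>) \<le> \<sigma>^2"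
    by simp_all
qed

lemma integrable_noise_inner:
  assumes s: "s \<in> {1..T}" and r: "r \<in> {1..T}"
  shows "integrable \<Omega> (\<lambda>\<omega>. noise \<omega> s \<bullet> noise \<omega> r)"
proof (rule Bochner_Integration.integrable_bound)
  show "integrable \<Omega> (\<lambda>\<omega>. (norm (noise \<omega> s))^2 + (norm (noise \<omega> r))^2)"
    using noise_second_moment(1)[OF s] noise_second_moment(1)[OF r] by (rule Bochner_Integration.integrable_add)
  show "(\<lambda>\<omega>. noise \<omega> s \<bullet> noise \<omega> r) \<in> borel_measurable \<Omega>"
    using noise_measurable[OF s] noise_measurable[OF r] by measurable
  show "AE \<omega> in \<Omega>. norm (noise \<omega> s \<bullet> noise \<omega> r) \<le> norm ((norm (noise \<omega> s))^2 + (norm (noise \<omega> r))^2)"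
  proof (intro AE_I2)
    fix \<omega>
    have "\<bar>noise \<omega> s \<bullet> noise \<omega> r\<bar> \<le> (norm (noise \<omega> s))^2 + (norm (noise \<omega> r))^2"
      by (rule abs_inner_le_norm_squares)
    then show "norm (noise \<omega> s \<bullet> noise \<omega> r) \<le> norm ((norm (noise \<omega> s))^2 + (norm (noise \<omega> r))^2)"
      unfolding real_norm_def by (rule order_trans[OF _ abs_ge_self])
  qed
qed

text \<open>Martingale-difference property: the noise of round \<open>r\<close> has conditional mean zero
  given everything that happened before round \<open>r\<close>.\<close>
lemma integral_noise_inner_eq_0:
  assumes s: "s \<in> {1..T}" and r: "r \<in> {1..T}" and "s < r"
  shows "(\<integral>\<omega>. noise \<omega> s \<bullet> noise \<omega> r \<partial>\<Omega>) = 0"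
proof -
  have int: "integrable (R \<Otimes>\<^sub>M PiM {1..T} (\<lambda>_. round_space)) (\<lambda>\<omega>. noise \<omega> s \<bullet> noise \<omega> r)"
    using integrable_noise_inner[OF s r] unfolding conv_space_eq .
  have inner: "(\<integral>z. noise (\<rho>, x(r := z)) s \<bullet> noise (\<rho>, x(r := z)) r \<partial>round_space) = 0" for \<rho> x
  proof -
    have "noise (\<rho>, x(r := z)) s \<bullet> noise (\<rho>, x(r := z)) r =
      noise (\<rho>, x) s \<bullet> (Orc (x0 + fst z *\<^sub>R \<Delta> (\<rho>, x) r) (snd z) - gradF (x0 + fst z *\<^sub>R \<Delta> (\<rho>, x) r))" for z
      unfolding noise_def conv_g_fun_upd_self conv_y_fun_upd_self
        conv_g_fun_upd_less[OF \<open>s < r\<close>] conv_y_fun_upd_less[OF \<open>s < r\<close>] ..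
    then show ?thesis
      using integral_inner_oracle_noise_segment[of "noise (\<rho>, x) s" x0 "\<Delta> (\<rho>, x) r"] by simp
  qed
  show ?thesis
    unfolding conv_space_eq integral_pair_PiM_fun_upd[OF R_prob prob_space_round_space finite_atLeastAtMost r int] inner
    by simp
qed

lemma noise_weighted_sum_square:
  assumes S: "S \<subseteq> {1..T}"
  shows "integrable \<Omega> (\<lambda>\<omega>. (norm (\<Sum>s\<in>S. c s *\<^sub>R noise \<omega> s))^2)"
    and "(\<integral>\<omega>. (norm (\<Sum>s\<in>S. c s *\<^sub>R noise \<omega> s))^2 \<partial>\<Omega>) \<le> \<sigma>^2 * (\<Sum>s\<in>S. (c s)^2)"
proof -
  have expand: "(norm (\<Sum>s\<in>S. c s *\<^sub>R v s))^2 = (\<Sum>s\<in>S. \<Sum>r\<in>S. c s * c r * (v s \<bullet> v r))" for v :: "nat \<Rightarrow> 'a"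
    unfolding power2_norm_eq_inner inner_sum_left inner_sum_right
    by (simp add: algebra_simps inner_commute)
  have int: "integrable \<Omega> (\<lambda>\<omega>. c s * c r * (noise \<omega> s \<bullet> noise \<omega> r))" if "s \<in> S" "r \<in> S" for s r
  proof -
    have "s \<in> {1..T}" "r \<in> {1..T}" using that S by auto
    from integrable_noise_inner[OF this] show ?thesis by simp
  qed
  show "integrable \<Omega> (\<lambda>\<omega>. (norm (\<Sum>s\<in>S. c s *\<^sub>R noise \<omega> s))^2)"
    unfolding expand using int by (intro Bochner_Integration.integrable_sum) auto
  have cross: "c s * c r * (\<integral>\<omega>. noise \<omega> s \<bullet> noise \<omega> r \<partial>\<Omega>) =
      (if s = r then (c s)^2 * (\<integral>\<omega>. (norm (noise \<omega> s))^2 \<partial>\<Omega>) else 0)"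
    if "s \<in> S" "r \<in> S" for s r
  proof (cases "s = r")
    case True
    show ?thesis
      unfolding True power2_norm_eq_inner by (simp add: power2_eq_square)
  next
    case False
    have "s \<in> {1..T}" "r \<in> {1..T}" using that S by auto
    with False have "(\<integral>\<omega>. noise \<omega> s \<bullet> noise \<omega> r \<partial>\<Omega>) = 0"
      using integral_noise_inner_eq_0[of s r] integral_noise_inner_eq_0[of r s]
      by (cases "s < r") (auto simp: inner_commute)
    with False show ?thesis by simp
  qed
  have "(\<integral>\<omega>. (norm (\<Sum>s\<in>S. c s *\<^sub>R noise \<omega> s))^2 \<partial>\<Omega>)
     = (\<Sum>s\<in>S. \<Sum>r\<in>S. c s * c r * (\<integral>\<omega>. noise \<omega> s \<bullet> noise \<omega> r \<partial>\<Omega>))"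
    unfolding expand using int by (simp add: Bochner_Integration.integral_sum Bochner_Integration.integrable_sum)
  also have "\<dots> = (\<Sum>s\<in>S. (c s)^2 * (\<integral>\<omega>. (norm (noise \<omega> s))^2 \<partial>\<Omega>))"
    using finite_subset[OF S] by (simp add: cross if_distrib cong: sum.cong)
  also have "\<dots> \<le> (\<Sum>s\<in>S. (c s)^2 * \<sigma>^2)"
    using noise_second_moment(2) S by (intro sum_mono mult_left_mono) auto
  finally show "(\<integral>\<omega>. (norm (\<Sum>s\<in>S. c s *\<^sub>R noise \<omega> s))^2 \<partial>\<Omega>) \<le> \<sigma>^2 * (\<Sum>s\<in>S. (c s)^2)"
    by (simp add: sum_distrib_left mult.commute)
qed

lemma norm_g_le: "norm (g \<omega> t) \<le> norm (noise \<omega> t) + G"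
  using norm_triangle_ineq[of "noise \<omega> t" "gradF (y \<omega> t)"] grad_bound[of "y \<omega> t"]
  unfolding noise_def by simp

lemma integrable_g_square:
  assumes t: "t \<in> {1..T}"
  shows "integrable \<Omega> (\<lambda>\<omega>. (norm (g \<omega> t))^2)"
proof (rule Bochner_Integration.integrable_bound)
  show "integrable \<Omega> (\<lambda>\<omega>. 2 * (norm (noise \<omega> t))^2 + 2 * G^2)"
    using noise_second_moment(1)[OF t] by auto
  have "(norm (g \<omega> t))^2 \<le> 2 * (norm (noise \<omega> t))^2 + 2 * G^2" for \<omega>
  proof -
    have "(norm (g \<omega> t))^2 \<le> (norm (noise \<omega> t) + G)^2"
      using norm_g_le G_nonneg by (intro power_mono) auto
    then show ?thesis
      using sum_squares_bound[of "norm (noise \<omega> t)" G] by (simp add: power2_eq_square algebra_simps)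
  qed
  then show "AE \<omega> in \<Omega>. norm ((norm (g \<omega> t))^2) \<le> norm (2 * (norm (noise \<omega> t))^2 + 2 * G^2)"
    by (intro AE_I2) simp
qed (use g_measurable[OF t] in measurable)

lemma integrable_g_inner_Delta:
  assumes t: "t \<in> {1..T}" and Delta_sq: "integrable \<Omega> (\<lambda>\<omega>. (norm (\<Delta> \<omega> t))^2)"
  shows "integrable \<Omega> (\<lambda>\<omega>. g \<omega> t \<bullet> \<Delta> \<omega> t)"
proof (rule Bochner_Integration.integrable_bound)
  show "integrable \<Omega> (\<lambda>\<omega>. (norm (g \<omega> t))^2 + (norm (\<Delta> \<omega> t))^2)"
    using integrable_g_square[OF t] Delta_sq by auto
  show "AE \<omega> in \<Omega>. norm (g \<omega> t \<bullet> \<Delta> \<omega> t) \<le> norm ((norm (g \<omega> t))^2 + (norm (\<Delta> \<omega> t))^2)"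
  proof (intro AE_I2)
    fix \<omega>
    have "\<bar>g \<omega> t \<bullet> \<Delta> \<omega> t\<bar> \<le> (norm (g \<omega> t))^2 + (norm (\<Delta> \<omega> t))^2"
      by (rule abs_inner_le_norm_squares)
    then show "norm (g \<omega> t \<bullet> \<Delta> \<omega> t) \<le> norm ((norm (g \<omega> t))^2 + (norm (\<Delta> \<omega> t))^2)"
      unfolding real_norm_def by (rule order_trans[OF _ abs_ge_self])
  qed
qed (use g_measurable[OF t] Delta_meas[OF t] in measurable)

lemma integrable_F_w:
  assumes t: "t \<in> {1..T}" and Delta_sq: "integrable \<Omega> (\<lambda>\<omega>. (norm (\<Delta> \<omega> t))^2)"
  shows "integrable \<Omega> (\<lambda>\<omega>. F (w \<omega> t) - F x0)"
proof (rule Bochner_Integration.integrable_bound)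
  show "integrable \<Omega> (\<lambda>\<omega>. G + G * (norm (\<Delta> \<omega> t))^2)"
    using Delta_sq by auto
  have "\<bar>F (w \<omega> t) - F x0\<bar> \<le> G + G * (norm (\<Delta> \<omega> t))^2" for \<omega>
  proof -
    have "\<bar>F (w \<omega> t) - F x0\<bar> \<le> G * norm (\<Delta> \<omega> t)"
      using F_lipschitz[of "w \<omega> t" x0] by (simp add: conv_w_def)
    also have "\<dots> \<le> G * (1 + (norm (\<Delta> \<omega> t))^2)"
    proof (rule mult_left_mono[OF _ G_nonneg])
      have "2 * norm (\<Delta> \<omega> t) \<le> (norm (\<Delta> \<omega> t))^2 + 1"
        using sum_squares_bound[of "norm (\<Delta> \<omega> t)" 1] by (simp add: power2_eq_square)
      with norm_ge_zero[of "\<Delta> \<omega> t"] show "norm (\<Delta> \<omega> t) \<le> 1 + (norm (\<Delta> \<omega> t))^2"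
        by linarith
    qed
    finally show ?thesis by (simp add: algebra_simps)
  qed
  then show "AE \<omega> in \<Omega>. norm (F (w \<omega> t) - F x0) \<le> norm (G + G * (norm (\<Delta> \<omega> t))^2)"
    using G_nonneg by (intro AE_I2) simp
qed (use w_measurable[OF t] in measurable)

lemma integral_g_inner_Delta:
  assumes t: "t \<in> {1..T}" and Delta_sq: "integrable \<Omega> (\<lambda>\<omega>. (norm (\<Delta> \<omega> t))^2)"
  shows "(\<integral>\<omega>. g \<omega> t \<bullet> \<Delta> \<omega> t \<partial>\<Omega>) = (\<integral>\<omega>. F (w \<omega> t) - F x0 \<partial>\<Omega>)"
proof -
  interpret round_space: prob_space round_space by (rule prob_space_round_space)
  note upd = integral_pair_PiM_fun_upd[OF R_prob prob_space_round_space finite_atLeastAtMost t]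
  have int_g: "integrable (R \<Otimes>\<^sub>M PiM {1..T} (\<lambda>_. round_space)) (\<lambda>\<omega>. g \<omega> t \<bullet> \<Delta> \<omega> t)"
    using integrable_g_inner_Delta[OF t Delta_sq] unfolding conv_space_eq .
  have int_F: "integrable (R \<Otimes>\<^sub>M PiM {1..T} (\<lambda>_. round_space)) (\<lambda>\<omega>. F (w \<omega> t) - F x0)"
    using integrable_F_w[OF t Delta_sq] unfolding conv_space_eq .
  have inner_g: "(\<integral>z. g (\<rho>, x(t := z)) t \<bullet> \<Delta> (\<rho>, x(t := z)) t \<partial>round_space) = F (w (\<rho>, x) t) - F x0" for \<rho> x
  proof -
    have "g (\<rho>, x(t := z)) t \<bullet> \<Delta> (\<rho>, x(t := z)) t = Orc (x0 + fst z *\<^sub>R \<Delta> (\<rho>, x) t) (snd z) \<bullet> \<Delta> (\<rho>, x) t" for z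
      unfolding conv_g_fun_upd_self conv_Delta_fun_upd[OF order_refl] ..
    then show ?thesis
      using integral_oracle_segment_inner[of x0 "\<Delta> (\<rho>, x) t"] by (simp add: conv_w_def)
  qed
  have inner_F: "(\<integral>z. F (w (\<rho>, x(t := z)) t) - F x0 \<partial>round_space) = F (w (\<rho>, x) t) - F x0" for \<rho> x
    unfolding conv_w_fun_upd_self by (simp add: round_space.prob_space)
  show ?thesis
    unfolding conv_space_eq upd[OF int_g] upd[OF int_F] inner_g inner_F ..
qed

end

section \<open>The tuned conversion\<close>

lemma le_half_plus_square_div:
  fixes x a :: real
  assumes "0 < a"
  shows "x \<le> a / 2 + x^2 / (2 * a)"
proof -
  have "0 \<le> (x - a)^2" by simp
  then have "x * (2 * a) \<le> a^2 + x^2" by (simp add: power2_eq_square algebra_simps)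
  with assms show ?thesis by (simp add: field_simps power2_eq_square)
qed

lemma lin_quad_loss_lower_bound:
  fixes g v :: "'a::real_inner" and mu :: real
  assumes "0 < mu"
  shows "mu / 4 * (norm v)^2 \<le> lin_quad_loss mu g v + (norm g)^2 / mu"
proof -
  have "0 \<le> (norm g - mu / 2 * norm v)^2" by simp
  then have "mu * (norm g * norm v) \<le> (norm g)^2 + mu^2 / 4 * (norm v)^2"
    by (simp add: power2_eq_square algebra_simps)
  with assms have "norm g * norm v \<le> (norm g)^2 / mu + mu / 4 * (norm v)^2"
    by (simp add: field_simps power2_eq_square)
  moreover have "- (norm g * norm v) \<le> g \<bullet> v"
    using Cauchy_Schwarz_ineq2[of g v] by linarith
  ultimately show ?thesis
    unfolding lin_quad_loss_def by linarith
qed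

locale tuned_conversion = conversion_run F gradF G \<sigma> Xi Orc R A x0 mu T
  for F :: "'a::euclidean_space \<Rightarrow> real" and gradF G \<sigma> and Xi :: "'e measure" and Orc
    and R :: "'r measure" and A x0 mu T +
  fixes lam \<epsilon> \<beta> :: real
  assumes lam_pos: "lam > 0"
    and eps_pos: "\<epsilon> > 0"
    and eps_le: "\<epsilon> \<le> 7/2 * (G + \<sigma>)"
    and T_ge: "real T \<ge> 49 * (G + \<sigma>)^2 / \<epsilon>^2"
    and beta_def: "\<beta> = 1 - (\<epsilon> / (7 * (G + \<sigma>)))^2"
    and mu_def: "mu = 2 * sqrt lam * sqrt \<epsilon>"
    and learner_regret: "\<And>t u. t \<in> {1..T} \<Longrightarrow>
          u \<in> borel_measurable (conv_space R Xi T) \<Longrightarrow>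
          integrable (conv_space R Xi T) (\<lambda>\<omega>. (norm (u \<omega>))^2) \<Longrightarrow>
          integrable (conv_space R Xi T)
             (\<lambda>\<omega>. regret_beta \<beta> (\<lambda>s. lin_quad_loss mu (conv_g A Orc x0 mu \<omega> s))
                     (conv_Delta A Orc x0 mu \<omega>) t (u \<omega>)) \<and>
          (\<integral>\<omega>. regret_beta \<beta> (\<lambda>s. lin_quad_loss mu (conv_g A Orc x0 mu \<omega> s))
                     (conv_Delta A Orc x0 mu \<omega>) t (u \<omega>) \<partial>conv_space R Xi T)
            \<le> (\<integral>\<omega>. 2 * norm (u \<omega>) * (G + \<sigma>) / (\<beta> * sqrt (1 - \<beta>)) + mu / 2 * (norm (u \<omega>))^2
                  \<partial>conv_space R Xi T)"
begin

definition "\<kappa> = \<epsilon> / (7 * (G + \<sigma>))"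

text \<open>The comparator norm of the general guarantee.\<close>
definition "D = sqrt \<epsilon> / (4 * sqrt lam)"

lemma G_plus_sigma_pos: "0 < G + \<sigma>"
proof -
  have "0 < 7/2 * (G + \<sigma>)" using eps_le eps_pos by linarith
  then show ?thesis by (simp add: zero_less_mult_iff)
qed

lemma kappa_pos: "0 < \<kappa>"
  unfolding \<kappa>_def using G_plus_sigma_pos eps_pos by simp

lemma kappa_square_le: "\<kappa>^2 \<le> 1/4"
proof -
  have "\<kappa> \<le> 1/2"
    unfolding \<kappa>_def using G_plus_sigma_pos eps_le by (simp add: divide_le_eq)
  then have "\<kappa>^2 \<le> (1/2)^2"
    using kappa_pos by (intro power_mono) auto
  then show ?thesis by (simp add: power2_eq_square)
qed

lemma one_minus_beta: "1 - \<beta> = \<kappa>^2"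
  unfolding beta_def \<kappa>_def by simp

lemma sqrt_one_minus_beta: "sqrt (1 - \<beta>) = \<kappa>"
  using one_minus_beta kappa_pos by simp

lemma beta_lt_1: "\<beta> < 1"
  using one_minus_beta kappa_pos by (smt (verit) zero_less_power)

lemma beta_ge: "3/4 \<le> \<beta>"
  using one_minus_beta kappa_square_le by linarith

lemma beta_pos: "0 < \<beta>"
  using beta_ge by simp

lemma kappa_G_sigma: "\<kappa> * (G + \<sigma>) = \<epsilon> / 7"
proof -
  have "\<epsilon> / (7 * c) * c = \<epsilon> / 7" if "0 < c" for c :: real
    using that by (simp add: field_simps)
  from this[OF G_plus_sigma_pos] show ?thesis unfolding \<kappa>_def .
qed

lemma T_kappa: "1 \<le> real T * \<kappa>^2"
proof -
  have "49 * c^2 / \<epsilon>^2 = 1 / (\<epsilon> / (7 * c))^2" if "0 < c" for c :: real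
    using that eps_pos by (simp add: field_simps)
  from this[OF G_plus_sigma_pos] T_ge have "1 / \<kappa>^2 \<le> real T"
    unfolding \<kappa>_def by simp
  with kappa_pos show ?thesis
    by (simp add: field_simps)
qed

lemma T_pos: "1 \<le> T"
  using T_kappa by (cases T) auto

lemma mu_pos: "0 < mu"
  unfolding mu_def using lam_pos eps_pos by simp

lemma D_pos: "0 < D"
  unfolding D_def using lam_pos eps_pos by simp

lemma mu_D: "mu * D = \<epsilon> / 2"
  unfolding mu_def D_def using lam_pos eps_pos by (simp add: field_simps)

lemma mu_div_D: "mu / (2 * D) = 4 * lam"
  unfolding mu_def D_def using lam_pos eps_pos by (simp add: field_simps)

lemma inverse_D: "1 / D = 4 * sqrt lam / sqrt \<epsilon>"
  unfolding D_def using lam_pos eps_pos by (simp add: field_simps)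

abbreviation "Reg \<omega> t u \<equiv> regret_beta \<beta> (\<lambda>s. lin_quad_loss mu (g \<omega> s)) (\<Delta> \<omega>) t u"

lemma regret_zero_eq:
  "Reg \<omega> t 0 = (\<Sum>s=1..t. \<beta>^(t-s) * lin_quad_loss mu (g \<omega> s) (\<Delta> \<omega> s))"
  unfolding regret_beta_def by (simp add: lin_quad_loss_def)

lemma integrable_regret_zero: "t \<in> {1..T} \<Longrightarrow> integrable \<Omega> (\<lambda>\<omega>. Reg \<omega> t 0)"
  using learner_regret[of t "\<lambda>_. 0"] by simp

text \<open>The regret bound for the comparator \<open>0\<close> makes the discounted loss integrable; each loss
  plus \<open>\<parallel>g\<parallel>\<^sup>2/\<mu>\<close> dominates \<open>\<mu>/4 \<parallel>\<Delta>\<parallel>\<^sup>2\<close>, which forces every step to be square integrable.\<close>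
lemma integrable_Delta_square:
  assumes s: "s \<in> {1..T}"
  shows "integrable \<Omega> (\<lambda>\<omega>. (norm (\<Delta> \<omega> s))^2)"
proof -
  define q where "q \<omega> j = lin_quad_loss mu (g \<omega> j) (\<Delta> \<omega> j) + (norm (g \<omega> j))^2 / mu" for \<omega> j
  define total where "total \<omega> = Reg \<omega> T 0 + (\<Sum>j=1..T. \<beta>^(T-j) * ((norm (g \<omega> j))^2 / mu))" for \<omega>
  have q_lower: "mu / 4 * (norm (\<Delta> \<omega> j))^2 \<le> q \<omega> j" for \<omega> j
    unfolding q_def by (rule lin_quad_loss_lower_bound[OF mu_pos])
  have q_nonneg: "0 \<le> q \<omega> j" for \<omega> j
    using mu_pos by (intro order_trans[OF _ q_lower]) simp
  have total_eq: "total \<omega> = (\<Sum>j=1..T. \<beta>^(T-j) * q \<omega> j)" for \<omega>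
    unfolding total_def regret_zero_eq q_def by (simp add: distrib_left sum.distrib)
  have bound: "(norm (\<Delta> \<omega> s))^2 \<le> 4 / (mu * \<beta>^(T-s)) * total \<omega>" for \<omega>
  proof -
    have "\<beta>^(T-s) * q \<omega> s \<le> total \<omega>"
      unfolding total_eq using s beta_pos q_nonneg by (intro member_le_sum) auto
    then have "q \<omega> s \<le> total \<omega> / \<beta>^(T-s)"
      using beta_pos by (simp add: pos_le_divide_eq mult.commute)
    moreover have "(norm (\<Delta> \<omega> s))^2 \<le> 4 / mu * q \<omega> s"
      using q_lower[of \<omega> s] mu_pos by (simp add: field_simps)
    ultimately have "(norm (\<Delta> \<omega> s))^2 \<le> 4 / mu * (total \<omega> / \<beta>^(T-s))"
      using mu_pos by (smt (verit) mult_left_mono divide_nonneg_pos)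
    then show ?thesis by simp
  qed
  have "integrable \<Omega> (\<lambda>\<omega>. \<Sum>j=1..T. \<beta>^(T-j) * ((norm (g \<omega> j))^2 / mu))"
    using integrable_g_square by (intro Bochner_Integration.integrable_sum) simp
  with integrable_regret_zero[of T] T_pos have "integrable \<Omega> total"
    unfolding total_def by simp
  then have "integrable \<Omega> (\<lambda>\<omega>. 4 / (mu * \<beta>^(T-s)) * total \<omega>)"
    by simp
  then show ?thesis
  proof (rule Bochner_Integration.integrable_bound)
    show "AE \<omega> in \<Omega>. norm ((norm (\<Delta> \<omega> s))^2) \<le> norm (4 / (mu * \<beta>^(T-s)) * total \<omega>)"
    proof (intro AE_I2)
      fix \<omega>
      show "norm ((norm (\<Delta> \<omega> s))^2) \<le> norm (4 / (mu * \<beta>^(T-s)) * total \<omega>)"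
        using order_trans[OF bound[of \<omega>] abs_ge_self] by simp
    qed
  qed (use Delta_meas[OF s] in measurable)
qed

definition B :: "nat \<Rightarrow> real" where
  "B t = disc_sum \<beta> (\<lambda>_. 1) t"

definition V :: "'r \<times> (nat \<Rightarrow> real \<times> 'e) \<Rightarrow> nat \<Rightarrow> 'a" where
  "V \<omega> t = (\<Sum>s=1..t. \<beta>^(t-s) *\<^sub>R g \<omega> s)"

definition N :: "'r \<times> (nat \<Rightarrow> real \<times> 'e) \<Rightarrow> nat \<Rightarrow> 'a" where
  "N \<omega> t = (\<Sum>s=1..t. \<beta>^(t-s) *\<^sub>R noise \<omega> s)"

text \<open>The comparator fed to the regret bound: the point of norm \<open>D\<close> opposite to \<open>V\<close>
  (and \<open>0\<close> when \<open>V = 0\<close>, by \<open>x / 0 = 0\<close>).\<close>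
definition u :: "'r \<times> (nat \<Rightarrow> real \<times> 'e) \<Rightarrow> nat \<Rightarrow> 'a" where
  "u \<omega> t = (- D / norm (V \<omega> t)) *\<^sub>R V \<omega> t"

lemma B_ge_1: "1 \<le> t \<Longrightarrow> 1 \<le> B t"
  unfolding B_def using beta_pos by (intro disc_sum_one_ge_1) auto

lemma B_eq_sum: "B t = (\<Sum>s=1..t. \<beta>^(t-s))"
  unfolding B_def disc_sum_def by simp

lemma regret_diff:
  "Reg \<omega> t v - Reg \<omega> t 0 = - (V \<omega> t \<bullet> v) - mu / 2 * (norm v)^2 * B t"
proof -
  have "Reg \<omega> t v - Reg \<omega> t 0 = (\<Sum>s=1..t. \<beta>^(t-s) * (- (g \<omega> s \<bullet> v) - mu / 2 * (norm v)^2))"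
    unfolding regret_beta_def lin_quad_loss_def by (simp add: sum_subtractf[symmetric] algebra_simps)
  also have "\<dots> = - (\<Sum>s=1..t. \<beta>^(t-s) * (g \<omega> s \<bullet> v)) - mu / 2 * (norm v)^2 * (\<Sum>s=1..t. \<beta>^(t-s))"
    by (simp add: algebra_simps sum_subtractf sum_distrib_left sum_distrib_right sum_negf)
  also have "(\<Sum>s=1..t. \<beta>^(t-s) * (g \<omega> s \<bullet> v)) = V \<omega> t \<bullet> v"
    unfolding V_def by (simp add: inner_sum_left)
  finally show ?thesis by (simp add: B_eq_sum)
qed

lemma norm_u_le: "norm (u \<omega> t) \<le> D"
  unfolding u_def using D_pos by (cases "V \<omega> t = 0") auto

lemma norm_V_le:
  assumes "1 \<le> t"
  shows "norm (V \<omega> t) \<le> (Reg \<omega> t (u \<omega> t) - Reg \<omega> t 0) / D + mu / 2 * D * B t"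
proof (cases "V \<omega> t = 0")
  case True
  then show ?thesis
    using mu_pos D_pos B_ge_1[OF assms] by (simp add: u_def regret_diff)
next
  case False
  then have "V \<omega> t \<bullet> u \<omega> t = - D * norm (V \<omega> t)" and "norm (u \<omega> t) = D"
    unfolding u_def using D_pos by (simp_all add: power2_norm_eq_inner[symmetric] power2_eq_square)
  then have "Reg \<omega> t (u \<omega> t) - Reg \<omega> t 0 = D * norm (V \<omega> t) - mu / 2 * D^2 * B t"
    unfolding regret_diff by simp
  then show ?thesis
    using D_pos by (simp add: field_simps power2_eq_square)
qed

lemma exp_avg_eq_mixture:
  assumes "1 \<le> t"
  shows "exp_avg \<beta> v t = (\<Sum>s=1..t. (\<beta>^(t-s) / B t) *\<^sub>R v s)"
proof -
  have "\<beta>^t < 1" using beta_lt_1 beta_pos assms by (simp add: power_less_one_iff)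
  then have "(1 - \<beta>) / (1 - \<beta>^t) = 1 / B t"
    unfolding B_def using beta_lt_1 by (simp add: disc_sum_one)
  then show ?thesis
    unfolding exp_avg_def by (simp add: scaleR_sum_right)
qed

definition step_energy :: "'r \<times> (nat \<Rightarrow> real \<times> 'e) \<Rightarrow> nat \<Rightarrow> real" where
  "step_energy \<omega> t = (\<Sum>s=1..t. \<beta>^(t-s) * (norm (\<Delta> \<omega> s))^2)"

lemma scaled_lambda_norm_le:
  assumes t: "t \<in> {1..T}" and unit: "\<forall>s\<in>{1..T}. 0 \<le> fst (snd \<omega> s) \<and> fst (snd \<omega> s) \<le> 1"
  shows "B t * lambda_norm gradF lam (exp_avg \<beta> (y \<omega>) t) \<le> norm (V \<omega> t - N \<omega> t) + lam * step_energy \<omega> t"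
proof -
  have B1: "1 \<le> B t" using B_ge_1 t by simp
  define wt where "wt s = \<beta>^(t-s) / B t" for s
  have wt_nonneg: "0 \<le> wt s" for s
    unfolding wt_def using beta_pos B1 by simp
  have "(\<Sum>s=1..t. wt s) = (\<Sum>s=1..t. \<beta>^(t-s)) / B t"
    unfolding wt_def by (simp add: sum_divide_distrib)
  with B1 have wt_sum: "(\<Sum>s=1..t. wt s) = 1"
    by (simp add: B_eq_sum)
  define m where "m = (\<Sum>s=1..t. wt s *\<^sub>R y \<omega> s)"
  have ybar: "exp_avg \<beta> (y \<omega>) t = m"
    unfolding m_def wt_def using t by (simp add: exp_avg_eq_mixture)
  have grad_mix: "(\<Sum>s=1..t. wt s *\<^sub>R gradF (y \<omega> s)) = (1 / B t) *\<^sub>R (V \<omega> t - N \<omega> t)"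
    unfolding V_def N_def noise_def wt_def
    by (simp add: sum_subtractf[symmetric] scaleR_diff_right scaleR_sum_right)
  have "(\<Sum>s=1..t. wt s * (norm (y \<omega> s - m))^2) \<le> (\<Sum>s=1..t. wt s * (norm (y \<omega> s - x0))^2)"
    using weighted_variance_le[OF wt_sum m_def, of x0] by simp
  also have "\<dots> \<le> (\<Sum>s=1..t. wt s * (norm (\<Delta> \<omega> s))^2)"
  proof (intro sum_mono mult_left_mono wt_nonneg)
    fix s assume "s \<in> {1..t}"
    then have "\<bar>fst (snd \<omega> s)\<bar> \<le> 1" using unit t by auto
    then have "norm (y \<omega> s - x0) \<le> norm (\<Delta> \<omega> s)"
      unfolding conv_y_def by (simp add: mult_left_le_one_le)
    then show "(norm (y \<omega> s - x0))^2 \<le> (norm (\<Delta> \<omega> s))^2"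
      by (intro power_mono) auto
  qed
  finally have "lambda_norm gradF lam m
      \<le> norm ((1 / B t) *\<^sub>R (V \<omega> t - N \<omega> t)) + lam * (\<Sum>s=1..t. wt s * (norm (\<Delta> \<omega> s))^2)"
    using lambda_norm_le_finite_mixture[OF gradF_measurable finite_atLeastAtMost wt_nonneg wt_sum
        less_imp_le[OF lam_pos] m_def] grad_mix lam_pos
    by (smt (verit) mult_left_mono)
  also have "norm ((1 / B t) *\<^sub>R (V \<omega> t - N \<omega> t)) = norm (V \<omega> t - N \<omega> t) / B t"
    using B1 by simp
  also have "(\<Sum>s=1..t. wt s * (norm (\<Delta> \<omega> s))^2) = (\<Sum>s=1..t. \<beta>^(t-s) * (norm (\<Delta> \<omega> s))^2) / B t"
    unfolding wt_def by (simp add: sum_divide_distrib)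
  finally have "lambda_norm gradF lam m
      \<le> (norm (V \<omega> t - N \<omega> t) + lam * (\<Sum>s=1..t. \<beta>^(t-s) * (norm (\<Delta> \<omega> s))^2)) / B t"
    by (simp add: add_divide_distrib)
  with B1 show ?thesis
    unfolding ybar step_energy_def by (simp add: pos_le_divide_eq mult.commute)
qed

text \<open>The AM-GM weight for \<open>\<parallel>N\<parallel> \<le> \<alpha>/2 + \<parallel>N\<parallel>\<^sup>2/(2\<alpha>)\<close>, balanced against
  \<open>E \<parallel>N\<parallel>\<^sup>2 \<le> \<sigma>\<^sup>2/\<kappa>\<^sup>2\<close>.\<close>
definition "\<alpha> = (G + \<sigma>) / \<kappa>"

lemma alpha_pos: "0 < \<alpha>"
  unfolding \<alpha>_def using G_plus_sigma_pos kappa_pos by simp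

definition majorant :: "'r \<times> (nat \<Rightarrow> real \<times> 'e) \<Rightarrow> nat \<Rightarrow> real" where
  "majorant \<omega> t = (Reg \<omega> t (u \<omega> t) - Reg \<omega> t 0) / D + mu / 2 * D * B t + \<alpha> / 2
     + (norm (N \<omega> t))^2 / (2 * \<alpha>) + lam * step_energy \<omega> t"

lemma scaled_lambda_norm_le_majorant:
  assumes t: "t \<in> {1..T}" and unit: "\<forall>s\<in>{1..T}. 0 \<le> fst (snd \<omega> s) \<and> fst (snd \<omega> s) \<le> 1"
  shows "B t * lambda_norm gradF lam (exp_avg \<beta> (y \<omega>) t) \<le> majorant \<omega> t"
  using scaled_lambda_norm_le[OF assms] norm_triangle_ineq4[of "V \<omega> t" "N \<omega> t"]
    norm_V_le[of t \<omega>] le_half_plus_square_div[OF alpha_pos, of "norm (N \<omega> t)"] t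
  unfolding majorant_def by simp

definition gap :: "nat \<Rightarrow> real" where
  "gap s = (\<integral>\<omega>. F (w \<omega> s) - F x0 \<partial>\<Omega>)"

definition sq_step :: "nat \<Rightarrow> real" where
  "sq_step s = (\<integral>\<omega>. (norm (\<Delta> \<omega> s))^2 \<partial>\<Omega>)"

lemma integral_regret_zero:
  assumes t: "t \<in> {1..T}"
  shows "(\<integral>\<omega>. Reg \<omega> t 0 \<partial>\<Omega>) = (\<Sum>s=1..t. \<beta>^(t-s) * (gap s + mu / 2 * sq_step s))"
proof -
  have sT: "s \<in> {1..T}" if "s \<in> {1..t}" for s using that t by auto
  have int_inner: "integrable \<Omega> (\<lambda>\<omega>. g \<omega> s \<bullet> \<Delta> \<omega> s)" if "s \<in> {1..t}" for s
    using integrable_g_inner_Delta[OF sT[OF that] integrable_Delta_square[OF sT[OF that]]] .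
  have int_sq: "integrable \<Omega> (\<lambda>\<omega>. (norm (\<Delta> \<omega> s))^2)" if "s \<in> {1..t}" for s
    using integrable_Delta_square[OF sT[OF that]] .
  have "(\<integral>\<omega>. Reg \<omega> t 0 \<partial>\<Omega>)
      = (\<Sum>s=1..t. (\<integral>\<omega>. \<beta>^(t-s) * (g \<omega> s \<bullet> \<Delta> \<omega> s + mu / 2 * (norm (\<Delta> \<omega> s))^2) \<partial>\<Omega>))"
    unfolding regret_zero_eq lin_quad_loss_def using int_inner int_sq by (intro Bochner_Integration.integral_sum) auto
  also have "\<dots> = (\<Sum>s=1..t. \<beta>^(t-s) * (gap s + mu / 2 * sq_step s))"
  proof (rule sum.cong[OF refl])
    fix s assume s: "s \<in> {1..t}"
    have "(\<integral>\<omega>. \<beta>^(t-s) * (g \<omega> s \<bullet> \<Delta> \<omega> s + mu / 2 * (norm (\<Delta> \<omega> s))^2) \<partial>\<Omega>)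
        = \<beta>^(t-s) * ((\<integral>\<omega>. g \<omega> s \<bullet> \<Delta> \<omega> s \<partial>\<Omega>) + mu / 2 * sq_step s)"
      unfolding sq_step_def using int_inner[OF s] int_sq[OF s] by simp
    also have "(\<integral>\<omega>. g \<omega> s \<bullet> \<Delta> \<omega> s \<partial>\<Omega>) = gap s"
      unfolding gap_def by (rule integral_g_inner_Delta[OF sT[OF s] int_sq[OF s]])
    finally show "(\<integral>\<omega>. \<beta>^(t-s) * (g \<omega> s \<bullet> \<Delta> \<omega> s + mu / 2 * (norm (\<Delta> \<omega> s))^2) \<partial>\<Omega>)
        = \<beta>^(t-s) * (gap s + mu / 2 * sq_step s)" .
  qed
  finally show ?thesis .
qed

definition "reg_bound = 2 * D * (G + \<sigma>) / (\<beta> * \<kappa>) + mu / 2 * D^2"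

lemma V_measurable: "t \<in> {1..T} \<Longrightarrow> (\<lambda>\<omega>. V \<omega> t) \<in> borel_measurable \<Omega>"
  unfolding V_def by (intro borel_measurable_sum borel_measurable_scaleR g_measurable) auto

lemma integral_regret_comparator:
  assumes t: "t \<in> {1..T}"
  shows "integrable \<Omega> (\<lambda>\<omega>. Reg \<omega> t (u \<omega> t))" and "(\<integral>\<omega>. Reg \<omega> t (u \<omega> t) \<partial>\<Omega>) \<le> reg_bound"
proof -
  have u_meas: "(\<lambda>\<omega>. u \<omega> t) \<in> borel_measurable \<Omega>"
    unfolding u_def using V_measurable[OF t] by measurable
  have "integrable \<Omega> (\<lambda>\<omega>. (norm (u \<omega> t))^2)"
    using u_meas norm_u_le D_pos by (intro \<Omega>.integrable_const_bound[where B="D^2"]) (auto intro!: power_mono)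
  note regret = learner_regret[OF t u_meas this]
  then show "integrable \<Omega> (\<lambda>\<omega>. Reg \<omega> t (u \<omega> t))" by simp
  have "2 * norm (u \<omega> t) * (G + \<sigma>) / (\<beta> * sqrt (1 - \<beta>)) + mu / 2 * (norm (u \<omega> t))^2 \<le> reg_bound" for \<omega>
  proof -
    have "2 * norm (u \<omega> t) * (G + \<sigma>) / (\<beta> * \<kappa>) \<le> 2 * D * (G + \<sigma>) / (\<beta> * \<kappa>)"
      using norm_u_le G_plus_sigma_pos beta_pos kappa_pos by (intro divide_right_mono mult_right_mono) auto
    moreover have "mu / 2 * (norm (u \<omega> t))^2 \<le> mu / 2 * D^2"
      using norm_u_le mu_pos by (intro mult_left_mono power_mono) auto
    ultimately show ?thesis
      unfolding reg_bound_def sqrt_one_minus_beta by linarith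
  qed
  then have "(\<integral>\<omega>. 2 * norm (u \<omega> t) * (G + \<sigma>) / (\<beta> * sqrt (1 - \<beta>)) + mu / 2 * (norm (u \<omega> t))^2 \<partial>\<Omega>) \<le> reg_bound"
    using D_pos G_plus_sigma_pos beta_pos kappa_pos mu_pos
    by (intro \<Omega>.integral_le_nonneg_const) (auto simp: reg_bound_def)
  with regret show "(\<integral>\<omega>. Reg \<omega> t (u \<omega> t) \<partial>\<Omega>) \<le> reg_bound" by linarith
qed

lemma noise_discounted_square:
  assumes t: "t \<in> {1..T}"
  shows "integrable \<Omega> (\<lambda>\<omega>. (norm (N \<omega> t))^2)" and "(\<integral>\<omega>. (norm (N \<omega> t))^2 \<partial>\<Omega>) \<le> \<sigma>^2 / \<kappa>^2"
proof -
  have S: "{1..t} \<subseteq> {1..T}" using t by auto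
  note noise_sum = noise_weighted_sum_square[OF S, of "\<lambda>s. \<beta>^(t-s)"]
  show "integrable \<Omega> (\<lambda>\<omega>. (norm (N \<omega> t))^2)"
    unfolding N_def using noise_sum(1) .
  have "(\<integral>\<omega>. (norm (N \<omega> t))^2 \<partial>\<Omega>) \<le> \<sigma>^2 * (\<Sum>s=1..t. (\<beta>^(t-s))^2)"
    unfolding N_def using noise_sum(2) .
  also have "\<dots> \<le> \<sigma>^2 * (1 / (1 - \<beta>))"
    using sum_power_square_le[OF less_imp_le[OF beta_pos] beta_lt_1] by (intro mult_left_mono) auto
  finally show "(\<integral>\<omega>. (norm (N \<omega> t))^2 \<partial>\<Omega>) \<le> \<sigma>^2 / \<kappa>^2"
    by (simp add: one_minus_beta)
qed

lemma integral_step_energy: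
  assumes t: "t \<in> {1..T}"
  shows "integrable \<Omega> (\<lambda>\<omega>. step_energy \<omega> t)" and "(\<integral>\<omega>. step_energy \<omega> t \<partial>\<Omega>) = disc_sum \<beta> sq_step t"
proof -
  have int: "integrable \<Omega> (\<lambda>\<omega>. \<beta>^(t-s) * (norm (\<Delta> \<omega> s))^2)" if "s \<in> {1..t}" for s
    using integrable_Delta_square[of s] that t by simp
  then show "integrable \<Omega> (\<lambda>\<omega>. step_energy \<omega> t)"
    unfolding step_energy_def by (rule Bochner_Integration.integrable_sum)
  have "(\<integral>\<omega>. step_energy \<omega> t \<partial>\<Omega>) = (\<Sum>s=1..t. (\<integral>\<omega>. \<beta>^(t-s) * (norm (\<Delta> \<omega> s))^2 \<partial>\<Omega>))"
    unfolding step_energy_def using int by (rule Bochner_Integration.integral_sum)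
  then show "(\<integral>\<omega>. step_energy \<omega> t \<partial>\<Omega>) = disc_sum \<beta> sq_step t"
    unfolding disc_sum_def sq_step_def by (simp only: integral_mult_right_zero)
qed

definition "K = reg_bound / D + \<alpha> / 2 + \<sigma>^2 / \<kappa>^2 / (2 * \<alpha>)"

lemma integrable_majorant:
  assumes t: "t \<in> {1..T}"
  shows "integrable \<Omega> (\<lambda>\<omega>. majorant \<omega> t)"
  unfolding majorant_def
  by (intro Bochner_Integration.integrable_add Bochner_Integration.integrable_diff integrable_divide_zero
      integrable_mult_right \<Omega>.integrable_const integral_regret_comparator(1)[OF t] integrable_regret_zero[OF t]
      noise_discounted_square(1)[OF t] integral_step_energy(1)[OF t])

text \<open>Here the choice \<open>\<mu>/(2D) = 4\<lambda>\<close> lets the \<open>\<mu>/2 \<parallel>\<Delta>\<parallel>\<^sup>2\<close> part of the losses absorb the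
  variance term \<open>\<lambda> \<parallel>\<Delta>\<parallel>\<^sup>2\<close> of the \<open>\<lambda>\<close>-norm.\<close>
lemma integral_majorant_le:
  assumes t: "t \<in> {1..T}"
  shows "(\<integral>\<omega>. majorant \<omega> t \<partial>\<Omega>) \<le> K + mu / 2 * D * B t - disc_sum \<beta> gap t / D"
proof -
  have "(\<integral>\<omega>. majorant \<omega> t \<partial>\<Omega>) = ((\<integral>\<omega>. Reg \<omega> t (u \<omega> t) \<partial>\<Omega>) - (\<integral>\<omega>. Reg \<omega> t 0 \<partial>\<Omega>)) / D
      + mu / 2 * D * B t + \<alpha> / 2 + (\<integral>\<omega>. (norm (N \<omega> t))^2 \<partial>\<Omega>) / (2 * \<alpha>) + lam * disc_sum \<beta> sq_step t"
    unfolding majorant_def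
    using integral_regret_comparator(1)[OF t] integrable_regret_zero[OF t] noise_discounted_square(1)[OF t]
      integral_step_energy[OF t]
    by (simp add: \<Omega>.prob_space)
  also have "\<dots> \<le> (reg_bound - (\<Sum>s=1..t. \<beta>^(t-s) * (gap s + mu / 2 * sq_step s))) / D
      + mu / 2 * D * B t + \<alpha> / 2 + \<sigma>^2 / \<kappa>^2 / (2 * \<alpha>) + lam * disc_sum \<beta> sq_step t"
    using integral_regret_comparator(2)[OF t] integral_regret_zero[OF t] noise_discounted_square(2)[OF t]
      D_pos alpha_pos
    by (intro add_mono divide_right_mono order_refl) auto
  also have "\<dots> = K + mu / 2 * D * B t - disc_sum \<beta> gap t / D - (mu / (2 * D) - lam) * disc_sum \<beta> sq_step t"
  proof -
    have "(\<Sum>s=1..t. \<beta>^(t-s) * (gap s + mu / 2 * sq_step s)) = disc_sum \<beta> gap t + mu / 2 * disc_sum \<beta> sq_step t"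
      by (simp add: disc_sum_def algebra_simps sum.distrib sum_distrib_left)
    then show ?thesis
      using D_pos by (simp add: K_def field_simps)
  qed
  also have "\<dots> \<le> K + mu / 2 * D * B t - disc_sum \<beta> gap t / D"
  proof -
    have "0 \<le> disc_sum \<beta> sq_step t"
      unfolding disc_sum_def sq_step_def using beta_pos
      by (intro sum_nonneg mult_nonneg_nonneg integral_nonneg_AE) auto
    then show ?thesis
      unfolding mu_div_D using lam_pos by simp
  qed
  finally show ?thesis .
qed

lemma integral_scaled_lambda_norm_le:
  assumes t: "t \<in> {1..T}"
  shows "B t * (\<integral>\<omega>. lambda_norm gradF lam (exp_avg \<beta> (y \<omega>) t) \<partial>\<Omega>)
    \<le> K + mu / 2 * D * B t - disc_sum \<beta> gap t / D"
proof -
  have AE_le: "AE \<omega> in \<Omega>. B t * lambda_norm gradF lam (exp_avg \<beta> (y \<omega>) t) \<le> majorant \<omega> t"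
    using AE_unit_steps by eventually_elim (rule scaled_lambda_norm_le_majorant[OF t])
  have nonneg: "0 \<le> B t * lambda_norm gradF lam (exp_avg \<beta> (y \<omega>) t)" for \<omega>
    using B_ge_1[of t] t lambda_norm_nonneg[OF gradF_measurable less_imp_le[OF lam_pos]]
    by (intro mult_nonneg_nonneg) auto
  have "(\<integral>\<omega>. B t * lambda_norm gradF lam (exp_avg \<beta> (y \<omega>) t) \<partial>\<Omega>) \<le> (\<integral>\<omega>. majorant \<omega> t \<partial>\<Omega>)"
  proof (cases "integrable \<Omega> (\<lambda>\<omega>. B t * lambda_norm gradF lam (exp_avg \<beta> (y \<omega>) t))")
    case True
    then show ?thesis using AE_le integrable_majorant[OF t] by (intro integral_mono_AE)
  next
    case False
    have "AE \<omega> in \<Omega>. 0 \<le> majorant \<omega> t"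
      using AE_le by eventually_elim (rule order_trans[OF nonneg])
    then have "0 \<le> (\<integral>\<omega>. majorant \<omega> t \<partial>\<Omega>)"
      by (rule integral_nonneg_AE)
    with False show ?thesis by (simp add: not_integrable_integral_eq)
  qed
  with integral_majorant_le[OF t] show ?thesis by simp
qed

lemma integral_sum_F_decrease:
  "(\<integral>\<omega>. (\<Sum>t=1..T. F x0 - F (w \<omega> t)) \<partial>\<Omega>) = - (\<Sum>t=1..T. gap t)"
proof -
  have "integrable \<Omega> (\<lambda>\<omega>. F x0 - F (w \<omega> t))" if "t \<in> {1..T}" for t
    using Bochner_Integration.integrable_minus[OF integrable_F_w[OF that integrable_Delta_square[OF that]]]
    by simp
  then have "(\<integral>\<omega>. (\<Sum>t=1..T. F x0 - F (w \<omega> t)) \<partial>\<Omega>) = (\<Sum>t=1..T. (\<integral>\<omega>. F x0 - F (w \<omega> t) \<partial>\<Omega>))"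
    by (intro Bochner_Integration.integral_sum) auto
  also have "\<dots> = (\<Sum>t=1..T. - gap t)"
    unfolding gap_def by (intro sum.cong refl) (simp flip: integral_minus)
  finally show ?thesis
    by (simp add: sum_negf)
qed

lemma K_le: "K \<le> 2 * (G + \<sigma>) / (\<beta> * \<kappa>) + \<epsilon> / 4 + (G + \<sigma>) / \<kappa>"
proof -
  have noise_term: "\<sigma>^2 / \<kappa>^2 / (2 * (c / \<kappa>)) \<le> c / (2 * \<kappa>)" if "0 < c" "\<sigma> \<le> c" for c
  proof -
    have "\<sigma>^2 \<le> c^2"
      using that sigma_nonneg by (intro power_mono) auto
    then have "\<sigma>^2 / (2 * \<kappa> * c) \<le> c^2 / (2 * \<kappa> * c)"
      using that kappa_pos by (intro divide_right_mono) auto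
    with that kappa_pos show ?thesis
      by (simp add: field_simps power2_eq_square)
  qed
  have "reg_bound / D = 2 * (G + \<sigma>) / (\<beta> * \<kappa>) + \<epsilon> / 4"
    unfolding reg_bound_def using D_pos mu_D by (simp add: field_simps power2_eq_square)
  with noise_term[OF G_plus_sigma_pos] G_nonneg show ?thesis
    unfolding K_def \<alpha>_def by simp
qed

lemma parameter_bound: "K * (\<Sum>t=1..T. tau_weight \<beta> T t) / real T + mu * D / 2 \<le> 3 * \<epsilon>"
proof -
  have T: "0 < real T" using T_pos by simp
  have K_nonneg: "0 \<le> K"
    unfolding K_def reg_bound_def using D_pos alpha_pos kappa_pos G_plus_sigma_pos beta_pos mu_pos by simp
  have "(\<Sum>t=1..T. tau_weight \<beta> T t) \<le> real T * (2 * \<kappa>^2)"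
    using sum_tau_weight_le[OF T_pos less_imp_le[OF beta_lt_1]] T_kappa unfolding one_minus_beta by linarith
  then have "K * (\<Sum>t=1..T. tau_weight \<beta> T t) \<le> K * (real T * (2 * \<kappa>^2))"
    using K_nonneg by (rule mult_left_mono)
  then have "K * (\<Sum>t=1..T. tau_weight \<beta> T t) / real T \<le> 2 * \<kappa>^2 * K"
    using T by (simp add: field_simps)
  also have "\<dots> \<le> 2 * \<kappa>^2 * (2 * (G + \<sigma>) / (\<beta> * \<kappa>) + \<epsilon> / 4 + (G + \<sigma>) / \<kappa>)"
    using K_le by (intro mult_left_mono) auto
  also have "\<dots> = 4 * (\<kappa> * (G + \<sigma>)) / \<beta> + \<kappa>^2 * \<epsilon> / 2 + 2 * (\<kappa> * (G + \<sigma>))"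
    using kappa_pos beta_pos by (simp add: field_simps power2_eq_square)
  also have "\<dots> \<le> 16/21 * \<epsilon> + \<epsilon> / 8 + 2/7 * \<epsilon>"
  proof -
    have "4 * (\<epsilon> / 7) / \<beta> \<le> 4 * (\<epsilon> / 7) / (3/4)"
      using beta_ge eps_pos by (intro divide_left_mono) auto
    then have "4 * (\<epsilon> / 7) / \<beta> \<le> 16/21 * \<epsilon>"
      by simp
    moreover have "\<kappa>^2 * \<epsilon> \<le> 1/4 * \<epsilon>"
      using kappa_square_le eps_pos by (intro mult_right_mono) auto
    ultimately show ?thesis
      unfolding kappa_G_sigma by linarith
  qed
  finally show ?thesis
    using mu_D eps_pos by linarith
qed

lemma sum_tau_weight_bound_eq:
  "(\<Sum>t=1..T. tau_weight \<beta> T t * (K + mu / 2 * D * B t - disc_sum \<beta> gap t / D))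
    = K * (\<Sum>t=1..T. tau_weight \<beta> T t) + mu / 2 * D * real T - (\<Sum>t=1..T. gap t) / D"
proof -
  have "(\<Sum>t=1..T. tau_weight \<beta> T t * (K + mu / 2 * D * B t - disc_sum \<beta> gap t / D))
      = K * (\<Sum>t=1..T. tau_weight \<beta> T t) + mu / 2 * D * (\<Sum>t=1..T. tau_weight \<beta> T t * B t)
        - (\<Sum>t=1..T. tau_weight \<beta> T t * disc_sum \<beta> gap t) / D"
    by (simp add: algebra_simps sum.distrib sum_subtractf sum_distrib_left sum_divide_distrib)
  then show ?thesis
    using sum_tau_weight_disc_sum[OF T_pos, of \<beta> "\<lambda>_. 1"] sum_tau_weight_disc_sum[OF T_pos, of \<beta> gap]
    unfolding B_def by simp
qed

lemma expected_lambda_norm_bound: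
  "(\<Sum>t=1..T. tau_prob \<beta> T t * (\<integral>\<omega>. lambda_norm gradF lam (exp_avg \<beta> (y \<omega>) t) \<partial>\<Omega>))
   \<le> 3 * \<epsilon> + 4 * sqrt lam / sqrt \<epsilon> / real T * (\<integral>\<omega>. (\<Sum>t=1..T. F x0 - F (w \<omega> t)) \<partial>\<Omega>)"
proof -
  have T: "0 < real T" using T_pos by simp
  have "(\<Sum>t=1..T. tau_prob \<beta> T t * (\<integral>\<omega>. lambda_norm gradF lam (exp_avg \<beta> (y \<omega>) t) \<partial>\<Omega>))
      \<le> (\<Sum>t=1..T. tau_weight \<beta> T t * (K + mu / 2 * D * B t - disc_sum \<beta> gap t / D) / real T)"
  proof (rule sum_mono)
    fix t assume t: "t \<in> {1..T}"
    let ?I = "\<integral>\<omega>. lambda_norm gradF lam (exp_avg \<beta> (y \<omega>) t) \<partial>\<Omega>"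
    have "0 \<le> tau_weight \<beta> T t"
      unfolding tau_weight_def using beta_lt_1 by simp
    from mult_left_mono[OF integral_scaled_lambda_norm_le[OF t] this]
    have "tau_weight \<beta> T t * (B t * ?I) / real T
        \<le> tau_weight \<beta> T t * (K + mu / 2 * D * B t - disc_sum \<beta> gap t / D) / real T"
      by (rule divide_right_mono) simp
    moreover have "tau_prob \<beta> T t * ?I = tau_weight \<beta> T t * (B t * ?I) / real T"
      unfolding tau_prob_eq_tau_weight[OF beta_lt_1 t] B_def by (simp add: mult.assoc)
    ultimately show "tau_prob \<beta> T t * ?I
        \<le> tau_weight \<beta> T t * (K + mu / 2 * D * B t - disc_sum \<beta> gap t / D) / real T"
      by simp
  qed
  also have "\<dots> = (K * (\<Sum>t=1..T. tau_weight \<beta> T t) + mu / 2 * D * real T - (\<Sum>t=1..T. gap t) / D) / real T"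
    unfolding sum_divide_distrib[symmetric] sum_tau_weight_bound_eq ..
  also have "\<dots> \<le> 3 * \<epsilon> + 1 / D / real T * (- (\<Sum>t=1..T. gap t))"
    using parameter_bound T by (simp add: field_simps)
  finally show ?thesis
    unfolding integral_sum_F_decrease inverse_D .
qed

end

theorem corollary2:
  fixes F :: "'a::euclidean_space \<Rightarrow> real" and gradF :: "'a \<Rightarrow> 'a"
    and G \<sigma> lam \<epsilon> \<beta> \<mu> :: real and T :: nat and x0 :: 'a
    and Xi :: "'e measure" and Orc :: "'a \<Rightarrow> 'e \<Rightarrow> 'a"
    and R :: "'r measure" and A :: "'r \<Rightarrow> ('a \<Rightarrow> real) list \<Rightarrow> 'a"
  assumes grad: "\<And>x. (F has_derivative (\<lambda>h. gradF x \<bullet> h)) (at x)"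
    and ftc: "\<And>x w. ((\<lambda>t. gradF (w + t *\<^sub>R (x - w)) \<bullet> (x - w)) has_integral (F x - F w)) {0..1}"
    and grad_bound: "\<And>x. norm (gradF x) \<le> G"
    and sigma_nonneg: "\<sigma> \<ge> 0"
    and Xi_prob: "prob_space Xi"
    and O_meas: "(\<lambda>p. Orc (fst p) (snd p)) \<in> borel_measurable (borel \<Otimes>\<^sub>M Xi)"
    and O_unbiased: "\<And>x. integrable Xi (Orc x) \<and> (\<integral>\<xi>. Orc x \<xi> \<partial>Xi) = gradF x"
    and O_variance: "\<And>x. integrable Xi (\<lambda>\<xi>. (norm (Orc x \<xi> - gradF x))^2) \<and>
                         (\<integral>\<xi>. (norm (Orc x \<xi> - gradF x))^2 \<partial>Xi) \<le> \<sigma>^2"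
    and R_prob: "prob_space R"
    and lam_pos: "lam > 0"
    and eps_pos: "\<epsilon> > 0"
    and eps_le: "\<epsilon> \<le> 7/2 * (G + \<sigma>)"
    and T_ge: "real T \<ge> 49 * (G + \<sigma>)^2 / \<epsilon>^2"
    and beta_def: "\<beta> = 1 - (\<epsilon> / (7 * (G + \<sigma>)))^2"
    and mu_def: "\<mu> = 2 * sqrt lam * sqrt \<epsilon>"
    and Delta_meas: "\<And>t. t \<in> {1..T} \<Longrightarrow>
          (\<lambda>\<omega>. conv_Delta A Orc x0 \<mu> \<omega> t) \<in> borel_measurable (conv_space R Xi T)"
    and learner_regret: "\<And>t u. t \<in> {1..T} \<Longrightarrow>
          u \<in> borel_measurable (conv_space R Xi T) \<Longrightarrow>
          integrable (conv_space R Xi T) (\<lambda>\<omega>. (norm (u \<omega>))^2) \<Longrightarrow>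
          integrable (conv_space R Xi T)
             (\<lambda>\<omega>. regret_beta \<beta> (\<lambda>s. lin_quad_loss \<mu> (conv_g A Orc x0 \<mu> \<omega> s))
                     (conv_Delta A Orc x0 \<mu> \<omega>) t (u \<omega>)) \<and>
          (\<integral>\<omega>. regret_beta \<beta> (\<lambda>s. lin_quad_loss \<mu> (conv_g A Orc x0 \<mu> \<omega> s))
                     (conv_Delta A Orc x0 \<mu> \<omega>) t (u \<omega>) \<partial>conv_space R Xi T)
            \<le> (\<integral>\<omega>. 2 * norm (u \<omega>) * (G + \<sigma>) / (\<beta> * sqrt (1 - \<beta>)) + \<mu> / 2 * (norm (u \<omega>))^2
                  \<partial>conv_space R Xi T)"
  shows "(\<Sum>t=1..T. tau_prob \<beta> T t *
            (\<integral>\<omega>. lambda_norm gradF lam (exp_avg \<beta> (conv_y A Orc x0 \<mu> \<omega>) t) \<partial>conv_space R Xi T))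
         \<le> 3 * \<epsilon> + 4 * sqrt lam / sqrt \<epsilon> / real T *
            (\<integral>\<omega>. (\<Sum>t=1..T. F x0 - F (conv_w A Orc x0 \<mu> \<omega> t)) \<partial>conv_space R Xi T)"
proof -
  interpret tuned_conversion F gradF G \<sigma> Xi Orc R A x0 \<mu> T lam \<epsilon> \<beta>
    by (intro tuned_conversion.intro conversion_run.intro stochastic_gradient_oracle.intro
        conversion_run_axioms.intro tuned_conversion_axioms.intro) fact+
  show ?thesis
    by (rule expected_lambda_norm_bound)
qed

end
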